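(* Suppose the following hold (Assumption 6): - $L_{\tilde f}B(x)$, $L_{\tilde g}B(x)$, $\gamma(B(x))$ and $u_{\text{ref}}(x)$ are twice continuously differentiable in $x$ on $\mathcal X$; - for every fixed dataset, the GP prediction functions $\mu_B(x,u)$ and $\sigma_B(x,u)$ are twice continuously differentiable in $x$ on $\mathcal X$. Let $x\in\mathcal X$ and a dataset $\mathbb D_N$ satisfy $\lambda_\dagger(x|\mathbb D_N)<0$. Then the solution map $x'\mapsto u^*(x')$ of the GP-CBF-SOCP with the fixed dataset $\mathbb D_N$ is locally Lipschitz continuous around $x$.
   Context: Consider the system $\dot x=f(x)+g(x)u$ with $x\in\mathcal X\subset\mathbb R^n$ and $u\in\mathbb R^m$, where $f,g$ are locally Lipschitz and unknown. A nominal model $\tilde f,\tilde g$ is available. Let $B:\mathcal X\to\mathbb R$ be $C^1$, let $\gamma$ be extended class-$\mathcal K_\infty$, and let $u_{\text{ref}}$ be a reference controller. Lie derivatives: $L_{\tilde f}B=\nabla B\,\tilde f$ and $L_{\tilde g}B=\nabla B\,\tilde g\in\mathbb R^{1\times m}$; $L_fB$ and $L_gB$ are defined similarly. Set $\Delta_B(x,u)=(L_fB-L_{\tilde f}B)(x)+(L_gB-L_{\tilde g}B)(x)u$. A dataset $\mathbb D_N=\{((x_j,u_j),z_j)\}$ consists of $z_j=\Delta_B(x_j,u_j)+\epsilon_j$. GP model with the affine dot product kernel $k_c((x,y),(x',y'))=y^T\mathrm{diag}(k_1(x,x'),\dots,k_{m+1}(x,x'))y'$: - Let $y_j=[1,u_j^T]^T$,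 $\mathbf z=(z_j)$, let $\sigma_n>0$, and let $K_c$ be the Gram matrix on the data. - Let $K_{**}(x)=\mathrm{diag}(k_i(x,x))$, and let $K_{*Y}(x)$ have entries $k_i(x,x_j)(y_j)_i$. - Define $m_B(x|\mathbb D)=K_{*Y}(K_c+\sigma_n^2I)^{-1}\mathbf z$ and $\Sigma_B(x|\mathbb D)=K_{**}-K_{*Y}(K_c+\sigma_n^2I)^{-1}K_{*Y}^T$, which is positive definite. - The posterior mean and standard deviation are $\mu_B(x,u)=m_B^T[1;u]$ and $\sigma_B(x,u)=\sqrt{[1,u^T]\Sigma_B[1;u]}$. $\beta>0$ is a constant. Derived quantities: - $\widehat{L_gB}=L_{\tilde g}B+((m_B)_2,\dots,(m_B)_{m+1})$. - $\Sigma_{L_gB}$ is the lower-right $m\times m$ block of $\Sigma_B$. - $\lambda_\dagger(x|\mathbb D)$ is the minimum eigenvalue of $\beta^2\Sigma_{L_gB}(x|\mathbb D)-\widehat{L_gB}(x|\mathbb D)^T\widehat{L_gB}(x|\mathbb D)$. The GP-CBF-SOCP at $x$ with dataset $\mathbb D_N$, whose minimizer is denoted $u^*(x)$, is: minimize $\|u-u_{\text{ref}}(x)\|_2^2$ over $u\in\mathbb R^m$ subject to $L_{\tilde f}B(x)+L_{\tilde g}B(x)u+\mu_B(x,u|\mathbb D_N)-\beta\sigma_B(x,u|\mathbb D_N)+\gamma(B(x))\ge0$. *)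

theory Defs
  imports "HOL-Analysis.Analysis"
begin

definition C2_on :: "'a::euclidean_space set \<Rightarrow> ('a \<Rightarrow> 'b::real_normed_vector) \<Rightarrow> bool" where
  "C2_on S h \<longleftrightarrow>
     (\<exists>(h' :: 'a \<Rightarrow> ('a \<Rightarrow>\<^sub>L 'b)) (h'' :: 'a \<Rightarrow> ('a \<Rightarrow>\<^sub>L ('a \<Rightarrow>\<^sub>L 'b))).
        (\<forall>x\<in>S. (h has_derivative blinfun_apply (h' x)) (at x) \<and>
                (h' has_derivative blinfun_apply (h'' x)) (at x)) \<and>
        continuous_on S h'')"

definition ext_class_K_inf :: "(real \<Rightarrow> real) \<Rightarrow> bool" where
  "ext_class_K_inf \<gamma> \<longleftrightarrow> continuous_on UNIV \<gamma> \<and> strict_mono \<gamma> \<and> \<gamma> 0 = 0 \<and>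
     filterlim \<gamma> at_top at_top \<and> filterlim \<gamma> at_bot at_bot"

definition is_eigenvalue :: "real^('k::finite)^('k::finite) \<Rightarrow> real \<Rightarrow> bool" where
  "is_eigenvalue M l \<longleftrightarrow> (\<exists>v. v \<noteq> 0 \<and> M *v v = l *\<^sub>R v)"

definition min_eigenvalue :: "real^('k::finite)^('k::finite) \<Rightarrow> real" where
  "min_eigenvalue M = Min {l. is_eigenvalue M l}"

definition psd_kernel :: "('a \<Rightarrow> 'a \<Rightarrow> real) \<Rightarrow> bool" where
  "psd_kernel k \<longleftrightarrow> (\<forall>x x'. k x x' = k x' x) \<and>
     (\<forall>F c. finite F \<longrightarrow> (\<Sum>a\<in>F. \<Sum>b\<in>F. c a * c b * k a b) \<ge> 0)"

definition LfB :: "(real^('n::finite) \<Rightarrow> real^('n::finite)) \<Rightarrow> (real^('n::finite) \<Rightarrow> real^('n::finite)) \<Rightarrow> real^('n::finite) \<Rightarrow> real" where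
  "LfB gradB ft x = gradB x \<bullet> ft x"

definition LgB :: "(real^('n::finite) \<Rightarrow> real^('n::finite)) \<Rightarrow> (real^('n::finite) \<Rightarrow> real^('m::finite)^('n::finite)) \<Rightarrow> real^('n::finite) \<Rightarrow> real^('m::finite)" where
  "LgB gradB gt x = gradB x v* gt x"

text \<open>The (m+1) kernel/feature indices are represented by the type 'm option:
  None is the first (constant) index, Some i the index of input component u_i.\<close>

definition aug :: "real^('m::finite) \<Rightarrow> real^(('m::finite) option)" where
  "aug u = (\<chi> i. case i of None \<Rightarrow> 1 | Some j \<Rightarrow> u $ j)"

definition gram_c ::
  "(('m::finite) option \<Rightarrow> real^('n::finite) \<Rightarrow> real^('n::finite) \<Rightarrow> real) \<Rightarrow> (('N::finite) \<Rightarrow> real^('n::finite)) \<Rightarrow> (('N::finite) \<Rightarrow> real^('m::finite)) \<Rightarrow> real^('N::finite)^('N::finite)" where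
  "gram_c k xs us = (\<chi> j l. \<Sum>i\<in>UNIV. aug (us j) $ i * k i (xs j) (xs l) * aug (us l) $ i)"

definition K_starY ::
  "(('m::finite) option \<Rightarrow> real^('n::finite) \<Rightarrow> real^('n::finite) \<Rightarrow> real) \<Rightarrow> (('N::finite) \<Rightarrow> real^('n::finite)) \<Rightarrow> (('N::finite) \<Rightarrow> real^('m::finite)) \<Rightarrow> real^('n::finite)
     \<Rightarrow> real^('N::finite)^(('m::finite) option)" where
  "K_starY k xs us x = (\<chi> i j. k i x (xs j) * aug (us j) $ i)"

definition K_starstar :: "(('m::finite) option \<Rightarrow> real^('n::finite) \<Rightarrow> real^('n::finite) \<Rightarrow> real) \<Rightarrow> real^('n::finite) \<Rightarrow> real^(('m::finite) option)^(('m::finite) option)" where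
  "K_starstar k x = (\<chi> i l. if i = l then k i x x else 0)"

definition m_B ::
  "(('m::finite) option \<Rightarrow> real^('n::finite) \<Rightarrow> real^('n::finite) \<Rightarrow> real) \<Rightarrow> real \<Rightarrow> (('N::finite) \<Rightarrow> real^('n::finite)) \<Rightarrow> (('N::finite) \<Rightarrow> real^('m::finite)) \<Rightarrow> real^('N::finite)
     \<Rightarrow> real^('n::finite) \<Rightarrow> real^(('m::finite) option)" where
  "m_B k sn xs us zs x =
     K_starY k xs us x *v (matrix_inv (gram_c k xs us + (sn\<^sup>2) *\<^sub>R mat 1) *v zs)"

definition Sigma_B ::
  "(('m::finite) option \<Rightarrow> real^('n::finite) \<Rightarrow> real^('n::finite) \<Rightarrow> real) \<Rightarrow> real \<Rightarrow> (('N::finite) \<Rightarrow> real^('n::finite)) \<Rightarrow> (('N::finite) \<Rightarrow> real^('m::finite))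
     \<Rightarrow> real^('n::finite) \<Rightarrow> real^(('m::finite) option)^(('m::finite) option)" where
  "Sigma_B k sn xs us x =
     K_starstar k x - K_starY k xs us x ** matrix_inv (gram_c k xs us + (sn\<^sup>2) *\<^sub>R mat 1)
       ** transpose (K_starY k xs us x)"

definition mu_B ::
  "(('m::finite) option \<Rightarrow> real^('n::finite) \<Rightarrow> real^('n::finite) \<Rightarrow> real) \<Rightarrow> real \<Rightarrow> (('N::finite) \<Rightarrow> real^('n::finite)) \<Rightarrow> (('N::finite) \<Rightarrow> real^('m::finite)) \<Rightarrow> real^('N::finite)
     \<Rightarrow> real^('n::finite) \<Rightarrow> real^('m::finite) \<Rightarrow> real" where
  "mu_B k sn xs us zs x u = m_B k sn xs us zs x \<bullet> aug u"

definition sigma_B ::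
  "(('m::finite) option \<Rightarrow> real^('n::finite) \<Rightarrow> real^('n::finite) \<Rightarrow> real) \<Rightarrow> real \<Rightarrow> (('N::finite) \<Rightarrow> real^('n::finite)) \<Rightarrow> (('N::finite) \<Rightarrow> real^('m::finite))
     \<Rightarrow> real^('n::finite) \<Rightarrow> real^('m::finite) \<Rightarrow> real" where
  "sigma_B k sn xs us x u = sqrt (aug u \<bullet> (Sigma_B k sn xs us x *v aug u))"

definition LgB_hat ::
  "(real^('n::finite) \<Rightarrow> real^('n::finite)) \<Rightarrow> (real^('n::finite) \<Rightarrow> real^('m::finite)^('n::finite)) \<Rightarrow>
   (('m::finite) option \<Rightarrow> real^('n::finite) \<Rightarrow> real^('n::finite) \<Rightarrow> real) \<Rightarrow> real \<Rightarrow> (('N::finite) \<Rightarrow> real^('n::finite)) \<Rightarrow> (('N::finite) \<Rightarrow> real^('m::finite)) \<Rightarrow> real^('N::finite)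
     \<Rightarrow> real^('n::finite) \<Rightarrow> real^('m::finite)" where
  "LgB_hat gradB gt k sn xs us zs x =
     LgB gradB gt x + (\<chi> i. m_B k sn xs us zs x $ Some i)"

definition Sigma_LgB ::
  "(('m::finite) option \<Rightarrow> real^('n::finite) \<Rightarrow> real^('n::finite) \<Rightarrow> real) \<Rightarrow> real \<Rightarrow> (('N::finite) \<Rightarrow> real^('n::finite)) \<Rightarrow> (('N::finite) \<Rightarrow> real^('m::finite))
     \<Rightarrow> real^('n::finite) \<Rightarrow> real^('m::finite)^('m::finite)" where
  "Sigma_LgB k sn xs us x = (\<chi> i j. Sigma_B k sn xs us x $ Some i $ Some j)"

definition lambda_dagger ::
  "real \<Rightarrow> (real^('n::finite) \<Rightarrow> real^('n::finite)) \<Rightarrow> (real^('n::finite) \<Rightarrow> real^('m::finite)^('n::finite)) \<Rightarrow>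
   (('m::finite) option \<Rightarrow> real^('n::finite) \<Rightarrow> real^('n::finite) \<Rightarrow> real) \<Rightarrow> real \<Rightarrow> (('N::finite) \<Rightarrow> real^('n::finite)) \<Rightarrow> (('N::finite) \<Rightarrow> real^('m::finite)) \<Rightarrow> real^('N::finite)
     \<Rightarrow> real^('n::finite) \<Rightarrow> real" where
  "lambda_dagger \<beta> gradB gt k sn xs us zs x =
     (let g = LgB_hat gradB gt k sn xs us zs x in
      min_eigenvalue ((\<beta>\<^sup>2) *\<^sub>R Sigma_LgB k sn xs us x - (\<chi> i j. g $ i * g $ j)))"

definition socp_feasible ::
  "real \<Rightarrow> (real \<Rightarrow> real) \<Rightarrow> (real^('n::finite) \<Rightarrow> real) \<Rightarrow> (real^('n::finite) \<Rightarrow> real^('n::finite)) \<Rightarrow> (real^('n::finite) \<Rightarrow> real^('n::finite)) \<Rightarrow>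
   (real^('n::finite) \<Rightarrow> real^('m::finite)^('n::finite)) \<Rightarrow>
   (('m::finite) option \<Rightarrow> real^('n::finite) \<Rightarrow> real^('n::finite) \<Rightarrow> real) \<Rightarrow> real \<Rightarrow> (('N::finite) \<Rightarrow> real^('n::finite)) \<Rightarrow> (('N::finite) \<Rightarrow> real^('m::finite)) \<Rightarrow> real^('N::finite)
     \<Rightarrow> real^('n::finite) \<Rightarrow> real^('m::finite) \<Rightarrow> bool" where
  "socp_feasible \<beta> \<gamma> B gradB ft gt k sn xs us zs x u \<longleftrightarrow>
     LfB gradB ft x + LgB gradB gt x \<bullet> u + mu_B k sn xs us zs x u
       - \<beta> * sigma_B k sn xs us x u + \<gamma> (B x) \<ge> 0"

definition socp_minimizer ::
  "real \<Rightarrow> (real \<Rightarrow> real) \<Rightarrow> (real^('n::finite) \<Rightarrow> real) \<Rightarrow> (real^('n::finite) \<Rightarrow> real^('n::finite)) \<Rightarrow> (real^('n::finite) \<Rightarrow> real^('n::finite)) \<Rightarrow>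
   (real^('n::finite) \<Rightarrow> real^('m::finite)^('n::finite)) \<Rightarrow> (real^('n::finite) \<Rightarrow> real^('m::finite)) \<Rightarrow>
   (('m::finite) option \<Rightarrow> real^('n::finite) \<Rightarrow> real^('n::finite) \<Rightarrow> real) \<Rightarrow> real \<Rightarrow> (('N::finite) \<Rightarrow> real^('n::finite)) \<Rightarrow> (('N::finite) \<Rightarrow> real^('m::finite)) \<Rightarrow> real^('N::finite)
     \<Rightarrow> real^('n::finite) \<Rightarrow> real^('m::finite) \<Rightarrow> bool" where
  "socp_minimizer \<beta> \<gamma> B gradB ft gt uref k sn xs us zs x u \<longleftrightarrow>
     socp_feasible \<beta> \<gamma> B gradB ft gt k sn xs us zs x u \<and>
     (\<forall>v. socp_feasible \<beta> \<gamma> B gradB ft gt k sn xs us zs x v \<longrightarrow>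
          (norm (u - uref x))\<^sup>2 \<le> (norm (v - uref x))\<^sup>2)"

end

theory Submission
  imports Defs
begin

text \<open>
  Write the constraint of the GP-CBF-SOCP at \<open>y\<close> as \<open>c y u = \<alpha> y + p y \<bullet> u - \<beta> \<sigma> y u \<ge> 0\<close>, where
  \<open>\<alpha> y\<close> collects the terms independent of \<open>u\<close>, \<open>p = LgB_hat\<close> and \<open>\<sigma> y u = sqrt ([1; u]\<^sup>T S(y) [1; u])\<close>
  with \<open>S = Sigma_B\<close>. Then \<open>c y\<close> is concave, so \<open>u\<^sup>*(y)\<close> is the point of \<open>{c y \<ge> 0}\<close> nearest to
  \<open>uref y\<close>, unique if it exists.
  If \<open>\<lambda>\<^sub>\<dagger>(x) < 0\<close>, some direction \<open>d\<close> satisfies \<open>p x \<bullet> d > \<beta> sqrt ([0; d]\<^sup>T S(x) [0; d])\<close>; by continuity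
  this persists near \<open>x\<close>, and far enough along \<open>d\<close> lies a point \<open>u\<^sub>0\<close> with \<open>c y u\<^sub>0 \<ge> 1\<close> for all
  \<open>y\<close> near \<open>x\<close>: a uniform Slater condition. It yields KKT multipliers \<open>\<mu> y \<ge> 0\<close> with
  \<open>u\<^sup>*(y) - uref y = \<mu> y \<cdot> G y (u\<^sup>*(y))\<close>, where \<open>G y\<close> is the gradient of \<open>c y\<close>; they are bounded because
  \<open>G y\<close> stays away from zero on the boundary of the feasible set. Comparing the KKT systems at two
  points \<open>y\<^sub>1, y\<^sub>2\<close> by concavity gives \<open>D\<^sup>2 \<le> A D d + B d\<^sup>2\<close> for \<open>D = \<parallel>u\<^sup>*(y\<^sub>1) - u\<^sup>*(y\<^sub>2)\<parallel>\<close> and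
  \<open>d = \<parallel>y\<^sub>1 - y\<^sub>2\<parallel>\<close>, hence \<open>D \<le> (A + B + 1) d\<close>. The constants are uniform because \<open>\<alpha>\<close>, \<open>p\<close>, \<open>S\<close>
  and \<open>uref\<close> are Lipschitz near \<open>x\<close> by Assumption 6; for \<open>S\<close> this follows by polarization from
  the regularity of \<open>\<sigma>\<close>.
\<close>

section \<open>Quadratic forms\<close>

definition quad_form :: "real^'k^'k \<Rightarrow> real^'k \<Rightarrow> real" where
  "quad_form S w = w \<bullet> (S *v w)"

lemma inner_matrix_vector_symmetric:
  fixes M :: "real^'k^'k"
  assumes "transpose M = M"
  shows "w \<bullet> (M *v v) = v \<bullet> (M *v w)"
proof -
  have "w \<bullet> (M *v v) = (w v* M) \<bullet> v" by (simp add: dot_lmul_matrix)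
  also have "w v* M = transpose M *v w" by simp
  also have "\<dots> = M *v w" using assms by simp
  finally show ?thesis by (simp add: inner_commute)
qed

lemma quad_form_add: "quad_form S (a + b) = quad_form S a + a \<bullet> (S *v b) + b \<bullet> (S *v a) + quad_form S b"
  by (simp add: quad_form_def matrix_vector_right_distrib inner_add_left inner_add_right)

lemma quad_form_scaleR: "quad_form S (t *\<^sub>R a) = t\<^sup>2 * quad_form S a"
  by (simp add: quad_form_def matrix_vector_mult_scaleR power2_eq_square)

lemma quad_form_minus: "quad_form S (- a) = quad_form S a"
  using quad_form_scaleR[of S "-1" a] by simp

lemma quad_form_diff_matrix: "quad_form S1 w - quad_form S2 w = quad_form (S1 - S2) w"
  by (simp add: quad_form_def matrix_vector_mult_diff_rdistrib inner_diff_right)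

lemma quad_form_add_scaleR:
  fixes M :: "real^'k^'k"
  assumes "transpose M = M"
  shows "quad_form M (v + t *\<^sub>R w) = quad_form M v + 2 * t * (v \<bullet> (M *v w)) + t\<^sup>2 * quad_form M w"
  using inner_matrix_vector_symmetric[OF assms, of w v]
  by (simp add: quad_form_add quad_form_scaleR matrix_vector_mult_scaleR algebra_simps)

lemma discriminant_nonpos_of_nonneg:
  fixes a b c :: real
  assumes "\<And>t. a + 2 * t * b + t\<^sup>2 * c \<ge> 0" "c \<ge> 0"
  shows "b\<^sup>2 \<le> a * c"
proof (cases "c = 0")
  case True
  have "b = 0"
  proof (rule ccontr)
    assume "b \<noteq> 0"
    have "a + 2 * (-(a + 1) / (2 * b)) * b + (-(a + 1) / (2 * b))\<^sup>2 * c \<ge> 0" by (rule assms(1))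
    thus False using True \<open>b \<noteq> 0\<close> by (simp add: field_simps)
  qed
  thus ?thesis using True by simp
next
  case False
  hence c: "c > 0" using assms(2) by simp
  have "a + 2 * (-b / c) * b + (-b / c)\<^sup>2 * c \<ge> 0" by (rule assms(1))
  hence "b\<^sup>2 / c \<le> a" using c by (simp add: power2_eq_square field_simps)
  thus ?thesis using c by (simp add: divide_le_eq mult.commute)
qed

lemma psd_Cauchy_Schwarz:
  fixes M :: "real^'k^'k"
  assumes sym: "transpose M = M" and psd: "\<And>z. quad_form M z \<ge> 0"
  shows "(v \<bullet> (M *v w))\<^sup>2 \<le> quad_form M v * quad_form M w"
  using psd quad_form_add_scaleR[OF sym] by (intro discriminant_nonpos_of_nonneg) metis+

lemma psd_Cauchy_Schwarz_sqrt:
  fixes M :: "real^'k^'k"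
  assumes "transpose M = M" and "\<And>z. quad_form M z \<ge> 0"
  shows "v \<bullet> (M *v w) \<le> sqrt (quad_form M v) * sqrt (quad_form M w)"
  using real_sqrt_le_mono[OF psd_Cauchy_Schwarz[OF assms, of v w]]
  by (simp add: real_sqrt_mult)

lemma sqrt_quad_form_triangle:
  fixes M :: "real^'k^'k"
  assumes sym: "transpose M = M" and psd: "\<And>z. quad_form M z \<ge> 0"
  shows "sqrt (quad_form M (v + w)) \<le> sqrt (quad_form M v) + sqrt (quad_form M w)"
proof -
  have "quad_form M (v + w) = quad_form M v + 2 * (v \<bullet> (M *v w)) + quad_form M w"
    using quad_form_add_scaleR[OF sym, of v 1 w] by simp
  also have "\<dots> \<le> (sqrt (quad_form M v) + sqrt (quad_form M w))\<^sup>2"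
    using psd_Cauchy_Schwarz_sqrt[OF sym psd, of v w] psd[of v] psd[of w]
    by (simp add: power2_sum)
  finally show ?thesis
    using psd[of v] psd[of w] by (simp add: real_le_lsqrt)
qed

lemma psd_quad_form_eq_0_imp_kernel:
  fixes N :: "real^'k^'k"
  assumes sym: "transpose N = N" and psd: "\<And>z. quad_form N z \<ge> 0" and "quad_form N v = 0"
  shows "N *v v = 0"
proof -
  have "(v \<bullet> (N *v (N *v v)))\<^sup>2 \<le> quad_form N v * quad_form N (N *v v)"
    by (rule psd_Cauchy_Schwarz[OF sym psd])
  hence "v \<bullet> (N *v (N *v v)) = 0" using assms(3) by simp
  hence "(N *v v) \<bullet> (N *v v) = 0" using inner_matrix_vector_symmetric[OF sym, of v "N *v v"] by simp
  thus ?thesis by simp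
qed

lemma quad_form_homogeneous_bound:
  fixes M :: "real^'k^'k"
  assumes "\<And>u. norm u = 1 \<Longrightarrow> l \<le> quad_form M u"
  shows "l * (norm w)\<^sup>2 \<le> quad_form M w"
proof (cases "w = 0")
  case True then show ?thesis by (simp add: quad_form_def)
next
  case False
  have "w = norm w *\<^sub>R (w /\<^sub>R norm w)" using False by simp
  hence "quad_form M w = (norm w)\<^sup>2 * quad_form M (w /\<^sub>R norm w)" by (metis quad_form_scaleR)
  moreover have "l \<le> quad_form M (w /\<^sub>R norm w)" using False by (intro assms) simp
  ultimately show ?thesis by (metis mult.commute mult_right_mono zero_le_power2)
qed

lemma quad_form_attains_min_on_sphere:
  fixes M :: "real^'k^'k"
  obtains v0 where "norm v0 = 1" "\<And>w. quad_form M v0 * (norm w)\<^sup>2 \<le> quad_form M w"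
proof -
  have "continuous_on (sphere 0 1) (quad_form M)" unfolding quad_form_def[abs_def]
    by (intro continuous_intros linear_continuous_on) auto
  moreover have "sphere (0::real^'k) 1 \<noteq> {}" by simp
  ultimately obtain v0 where "v0 \<in> sphere 0 1" "\<forall>v\<in>sphere 0 1. quad_form M v0 \<le> quad_form M v"
    using continuous_attains_inf[OF compact_sphere] by blast
  thus ?thesis using that quad_form_homogeneous_bound[of "quad_form M v0" M] by simp
qed

lemma pd_quad_form_coercive:
  fixes M :: "real^'k^'k"
  assumes "\<And>w. w \<noteq> 0 \<Longrightarrow> quad_form M w > 0"
  obtains l where "l > 0" "\<And>w. l * (norm w)\<^sup>2 \<le> quad_form M w"
  using quad_form_attains_min_on_sphere[of M] assms by (metis norm_zero zero_neq_one)

lemma symmetric_has_eigenvalue: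
  fixes M :: "real^'k^'k"
  assumes sym: "transpose M = M"
  shows "\<exists>l. is_eigenvalue M l"
proof -
  obtain v0 where v0: "norm v0 = 1" "\<And>w. quad_form M v0 * (norm w)\<^sup>2 \<le> quad_form M w"
    using quad_form_attains_min_on_sphere by blast
  define l where "l = quad_form M v0"
  define N where "N = M - l *\<^sub>R mat 1"
  have Nv: "N *v v = M *v v - l *\<^sub>R v" for v
    by (simp add: N_def matrix_vector_mult_diff_rdistrib scaleR_matrix_vector_assoc[symmetric])
  have quad_N: "quad_form N z = quad_form M z - l * (norm z)\<^sup>2" for z
    by (simp add: quad_form_def Nv inner_diff_right power2_norm_eq_inner)
  have "transpose N = N"
    using sym by (simp add: N_def transpose_def vec_eq_iff mat_def)
  moreover have "quad_form N z \<ge> 0" for z using v0(2)[of z] by (simp add: quad_N l_def)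
  moreover have "quad_form N v0 = 0" using v0(1) by (simp add: quad_N l_def)
  ultimately have "N *v v0 = 0" by (rule psd_quad_form_eq_0_imp_kernel)
  hence "M *v v0 = l *\<^sub>R v0" by (simp add: Nv)
  moreover have "v0 \<noteq> 0" using v0(1) by auto
  ultimately show ?thesis unfolding is_eigenvalue_def by blast
qed

lemma symmetric_finite_eigenvalues:
  fixes M :: "real^'k^'k"
  assumes sym: "transpose M = M"
  shows "finite {l. is_eigenvalue M l}"
proof -
  define E where "E = {l. is_eigenvalue M l}"
  define ev where "ev l = (SOME v. v \<noteq> 0 \<and> M *v v = l *\<^sub>R v)" for l
  have ev: "ev l \<noteq> 0 \<and> M *v ev l = l *\<^sub>R ev l" if "l \<in> E" for l
    using that unfolding E_def is_eigenvalue_def ev_def by (metis (mono_tags, lifting) someI_ex mem_Collect_eq)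
  have orth: "ev l1 \<bullet> ev l2 = 0" if "l1 \<in> E" "l2 \<in> E" "l1 \<noteq> l2" for l1 l2
  proof -
    have "ev l1 \<bullet> (M *v ev l2) = ev l2 \<bullet> (M *v ev l1)" by (rule inner_matrix_vector_symmetric[OF sym])
    hence "l2 * (ev l1 \<bullet> ev l2) = l1 * (ev l1 \<bullet> ev l2)"
      using ev[OF that(1)] ev[OF that(2)] by (simp add: inner_commute)
    thus ?thesis using that(3) by simp
  qed
  have "inj_on ev E"
    using orth ev by (metis inj_onI inner_eq_zero_iff)
  moreover have "independent (ev ` E)"
    using orth ev by (intro pairwise_orthogonal_independent) (auto simp: pairwise_def orthogonal_def)
  ultimately show ?thesis using finiteI_independent finite_imageD E_def by blast
qed

lemma min_eigenvalue_neg_imp_neg_quad_form: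
  fixes M :: "real^'k^'k"
  assumes sym: "transpose M = M" and neg: "min_eigenvalue M < 0"
  obtains v where "quad_form M v < 0"
proof -
  have "min_eigenvalue M \<in> {l. is_eigenvalue M l}"
    unfolding min_eigenvalue_def using symmetric_finite_eigenvalues[OF sym] symmetric_has_eigenvalue[OF sym]
    by (intro Min_in) auto
  then obtain v where v: "v \<noteq> 0" "M *v v = min_eigenvalue M *\<^sub>R v" unfolding is_eigenvalue_def by auto
  have "quad_form M v = min_eigenvalue M * (v \<bullet> v)" using v by (simp add: quad_form_def)
  also have "\<dots> < 0" using v neg by (simp add: mult_neg_pos)
  finally show ?thesis by (rule that)
qed

lemma norm_matrix_vector_mult_le:
  fixes A :: "real^'n^'m"
  shows "norm (A *v x) \<le> norm A * norm x"
proof -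
  have "(norm (A *v x))\<^sup>2 = (\<Sum>i\<in>UNIV. (A $ i \<bullet> x)\<^sup>2)"
    unfolding power2_norm_eq_inner by (simp add: inner_vec_def matrix_mult_dot power2_eq_square)
  also have "\<dots> \<le> (\<Sum>i\<in>UNIV. (norm (A $ i))\<^sup>2 * (norm x)\<^sup>2)"
    by (intro sum_mono) (metis Cauchy_Schwarz_ineq power2_norm_eq_inner)
  also have "\<dots> = (norm A * norm x)\<^sup>2"
    unfolding power_mult_distrib sum_distrib_right[symmetric]
    by (simp only: power2_norm_eq_inner inner_vec_def)
  finally show ?thesis by (rule power2_le_imp_le) simp
qed

lemma abs_quad_form_le: "\<bar>quad_form S w\<bar> \<le> norm S * (norm w)\<^sup>2"
proof -
  have "\<bar>quad_form S w\<bar> \<le> norm w * norm (S *v w)" unfolding quad_form_def by (rule Cauchy_Schwarz_ineq2)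
  also have "\<dots> \<le> norm w * (norm S * norm w)" by (intro mult_left_mono norm_matrix_vector_mult_le) auto
  finally show ?thesis by (simp add: power2_eq_square mult_ac)
qed

lemma matrix_entry_polarization:
  fixes S :: "real^'k^'k"
  assumes sym: "transpose S = S"
  shows "S $ i $ j = (quad_form S (axis i 1 + axis j 1) - quad_form S (axis i 1 - axis j 1)) / 4"
proof -
  have "(axis i 1 :: real^'k) \<bullet> (S *v axis j 1) = S $ i $ j"
    by (simp add: matrix_vector_mult_basis inner_axis' column_def)
  thus ?thesis
    using inner_matrix_vector_symmetric[OF sym, of "axis i 1" "axis j 1"]
    by (simp add: quad_form_def matrix_vector_right_distrib matrix_vector_mult_diff_distrib
        inner_add_left inner_add_right inner_diff_left inner_diff_right)
qed

section \<open>Lipschitz continuity\<close>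

lemma lipschitz_on_vec_nth:
  "C-lipschitz_on K f \<Longrightarrow> C-lipschitz_on K (\<lambda>y. f y $ i)"
  unfolding lipschitz_on_def by (meson dist_vec_nth_le order_trans)

lemma lipschitz_on_vec_lambda:
  assumes "\<And>i. (C i)-lipschitz_on K (\<lambda>y. f y $ i)"
  shows "(\<Sum>i\<in>UNIV. C i)-lipschitz_on K f"
proof (rule lipschitz_onI)
  fix a b assume ab: "a \<in> K" "b \<in> K"
  have "dist (f a) (f b) \<le> (\<Sum>i\<in>UNIV. dist (f a $ i) (f b $ i))"
    unfolding dist_vec_def by (rule L2_set_le_sum) simp
  also have "\<dots> \<le> (\<Sum>i\<in>UNIV. C i * dist a b)"
    using assms ab by (intro sum_mono lipschitz_onD)
  finally show "dist (f a) (f b) \<le> (\<Sum>i\<in>UNIV. C i) * dist a b"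
    by (simp add: sum_distrib_right)
qed (use assms lipschitz_on_nonneg in \<open>blast intro: sum_nonneg\<close>)

lemma ex_lipschitz_on_vec_lambda:
  assumes "\<And>i. \<exists>L. L-lipschitz_on K (\<lambda>y. f y $ i)"
  shows "\<exists>L. L-lipschitz_on K f"
proof -
  obtain C where "\<And>i. (C i)-lipschitz_on K (\<lambda>y. f y $ i)" using assms by metis
  thus ?thesis using lipschitz_on_vec_lambda by blast
qed

lemma lipschitz_on_bounded_image:
  assumes f: "L-lipschitz_on U f" and U: "bounded U"
  shows "bounded (f ` U)"
proof (cases "U = {}")
  case False
  then obtain x0 where x0: "x0 \<in> U" by blast
  obtain e where e: "\<And>y. y \<in> U \<Longrightarrow> dist x0 y \<le> e" using U bounded_any_center by metis
  have "dist (f x0) (f y) \<le> L * e" if "y \<in> U" for y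
    using lipschitz_onD[OF f x0 that] e[OF that] lipschitz_on_nonneg[OF f]
    by (meson mult_left_mono order_trans)
  thus ?thesis unfolding bounded_any_center[of _ "f x0"] by blast
qed simp

lemma (in bounded_bilinear) lipschitz_on_bounded:
  assumes U: "bounded U" and f: "C-lipschitz_on U f" and g: "D-lipschitz_on U g"
  obtains L where "L-lipschitz_on U (\<lambda>x. prod (f x) (g x))"
proof -
  obtain F G where F: "\<And>x. x \<in> U \<Longrightarrow> norm (f x) \<le> F" and G: "\<And>x. x \<in> U \<Longrightarrow> norm (g x) \<le> G"
    using lipschitz_on_bounded_image[OF f U] lipschitz_on_bounded_image[OF g U]
    unfolding bounded_iff by (metis imageI)
  obtain K where K: "K \<ge> 0" "\<And>a b. norm (prod a b) \<le> norm a * norm b * K" using nonneg_bounded by blast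
  have C: "C \<ge> 0" and D: "D \<ge> 0" using f g lipschitz_on_nonneg by blast+
  have "((C * max G 0 + max F 0 * D) * K)-lipschitz_on U (\<lambda>x. prod (f x) (g x))"
  proof (rule lipschitz_onI)
    fix a b assume ab: "a \<in> U" "b \<in> U"
    have "prod (f a) (g a) - prod (f b) (g b) = prod (f a - f b) (g a) + prod (f b) (g a - g b)"
      by (simp add: diff_left diff_right)
    hence "dist (prod (f a) (g a)) (prod (f b) (g b)) \<le> norm (f a - f b) * norm (g a) * K + norm (f b) * norm (g a - g b) * K"
      unfolding dist_norm
      using norm_triangle_ineq[of "prod (f a - f b) (g a)" "prod (f b) (g a - g b)"]
        K(2)[of "f a - f b" "g a"] K(2)[of "f b" "g a - g b"] by simp
    also have "\<dots> \<le> (C * dist a b) * max G 0 * K + max F 0 * (D * dist a b) * K"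
    proof (intro add_mono mult_right_mono mult_mono)
      show "norm (f a - f b) \<le> C * dist a b" "norm (g a - g b) \<le> D * dist a b"
        using lipschitz_onD[OF f ab] lipschitz_onD[OF g ab] by (simp_all add: dist_norm)
      show "norm (g a) \<le> max G 0" "norm (f b) \<le> max F 0"
        using F[OF ab(2)] G[OF ab(1)] by simp_all
    qed (use C D K(1) in simp_all)
    finally show "dist (prod (f a) (g a)) (prod (f b) (g b)) \<le> (C * max G 0 + max F 0 * D) * K * dist a b"
      by (simp add: algebra_simps)
  qed (use C D K in simp)
  thus ?thesis by (rule that)
qed

lemma bounded_bilinear_matrix_vector_mult:
  "bounded_bilinear ((*v) :: real^'n^'m \<Rightarrow> real^'n \<Rightarrow> real^'m)"
proof
  show "\<exists>K. \<forall>(A :: real^'n^'m) x. norm (A *v x) \<le> norm A * norm x * K"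
    using norm_matrix_vector_mult_le by (intro exI[of _ 1] allI) auto
qed (simp_all add: matrix_vector_mult_add_rdistrib matrix_vector_right_distrib
      matrix_vector_mult_scaleR flip: scaleR_matrix_vector_assoc)

lemma lipschitz_on_sqrt:
  assumes "l > 0"
  shows "(1 / (2 * sqrt l))-lipschitz_on {l..} sqrt"
proof (rule lipschitz_onI)
  fix a b assume "a \<in> {l..}" "b \<in> {l..}"
  hence sa: "sqrt a \<ge> sqrt l" and sb: "sqrt b \<ge> sqrt l" by auto
  have sl: "sqrt l > 0" using assms by simp
  have "(sqrt a - sqrt b) * (sqrt a + sqrt b) = a - b"
    using sa sb sl by (simp add: algebra_simps)
  hence "\<bar>sqrt a - sqrt b\<bar> * (sqrt a + sqrt b) = \<bar>a - b\<bar>"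
    using sa sb sl by (metis abs_mult abs_of_nonneg add_nonneg_nonneg less_imp_le order_trans)
  moreover have "2 * sqrt l \<le> sqrt a + sqrt b" using sa sb by linarith
  hence "\<bar>sqrt a - sqrt b\<bar> * (2 * sqrt l) \<le> \<bar>sqrt a - sqrt b\<bar> * (sqrt a + sqrt b)"
    by (intro mult_left_mono) auto
  ultimately show "dist (sqrt a) (sqrt b) \<le> 1 / (2 * sqrt l) * dist a b"
    using sl by (simp add: dist_real_def field_simps)
qed (use assms in simp)

lemma lipschitz_on_inverse:
  fixes m :: real
  assumes "m > 0"
  shows "(1 / m\<^sup>2)-lipschitz_on {m..} inverse"
proof (rule lipschitz_onI)
  fix a b assume "a \<in> {m..}" "b \<in> {m..}"
  hence ab: "a \<ge> m" "b \<ge> m" by auto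
  have "m\<^sup>2 \<le> a * b" using ab assms by (simp add: power2_eq_square mult_mono)
  moreover have "m\<^sup>2 > 0" using assms by simp
  moreover have "a * b > 0" using ab assms by simp
  ultimately have "\<bar>b - a\<bar> / (a * b) \<le> \<bar>b - a\<bar> / m\<^sup>2" using assms by (intro divide_left_mono) auto
  moreover have "inverse a - inverse b = (b - a) / (a * b)" using ab assms by (simp add: field_simps)
  ultimately show "dist (inverse a) (inverse b) \<le> 1 / m\<^sup>2 * dist a b"
    using ab assms by (simp add: dist_real_def abs_mult abs_minus_commute)
qed simp

lemma lipschitz_on_fst_comp:
  assumes "C-lipschitz_on Y f"
  shows "C-lipschitz_on (Y \<times> Z) (\<lambda>z. f (fst z))"
proof (rule lipschitz_onI)
  fix a b assume "a \<in> Y \<times> Z" "b \<in> Y \<times> Z"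
  hence "dist (f (fst a)) (f (fst b)) \<le> C * dist (fst a) (fst b)"
    using assms by (auto intro: lipschitz_onD)
  also have "\<dots> \<le> C * dist a b"
    using dist_fst_le lipschitz_on_nonneg[OF assms] by (rule mult_left_mono)
  finally show "dist (f (fst a)) (f (fst b)) \<le> C * dist a b" .
qed (rule lipschitz_on_nonneg[OF assms])

lemma lipschitz_on_snd_comp:
  assumes "C-lipschitz_on Z f"
  shows "C-lipschitz_on (Y \<times> Z) (\<lambda>z. f (snd z))"
proof (rule lipschitz_onI)
  fix a b assume "a \<in> Y \<times> Z" "b \<in> Y \<times> Z"
  hence "dist (f (snd a)) (f (snd b)) \<le> C * dist (snd a) (snd b)"
    using assms by (auto intro: lipschitz_onD)
  also have "\<dots> \<le> C * dist a b"
    using dist_snd_le lipschitz_on_nonneg[OF assms] by (rule mult_left_mono)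
  finally show "dist (f (snd a)) (f (snd b)) \<le> C * dist a b" .
qed (rule lipschitz_on_nonneg[OF assms])

lemma lipschitz_on_cball_isCont:
  assumes "L-lipschitz_on (cball x e) f" "e > 0"
  shows "isCont f x"
proof -
  have "x \<in> interior (cball x e)"
    using interior_maximal[OF ball_subset_cball open_ball, of x e] assms(2) centre_in_ball[of x e] by blast
  thus ?thesis by (rule continuous_on_interior[OF lipschitz_on_continuous_on[OF assms(1)]])
qed

lemma C2_on_lipschitz_on_cball:
  assumes C2: "C2_on X h" and sub: "cball x e \<subseteq> X"
  shows "\<exists>L. L-lipschitz_on (cball x e) h"
proof -
  obtain h' :: "'a \<Rightarrow> ('a \<Rightarrow>\<^sub>L 'b)" and h'' :: "'a \<Rightarrow> ('a \<Rightarrow>\<^sub>L ('a \<Rightarrow>\<^sub>L 'b))" where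
    d: "\<forall>y\<in>X. (h has_derivative blinfun_apply (h' y)) (at y) \<and> (h' has_derivative blinfun_apply (h'' y)) (at y)"
    using C2 unfolding C2_on_def by blast
  have "continuous_on (cball x e) h'"
    using d sub by (intro continuous_at_imp_continuous_on) (auto intro: has_derivative_continuous)
  hence "bounded (h' ` cball x e)" by (intro compact_imp_bounded compact_continuous_image) auto
  then obtain B where B: "B \<ge> 0" "\<And>y. y \<in> cball x e \<Longrightarrow> norm (h' y) \<le> B"
    unfolding bounded_pos by (metis imageI less_imp_le)
  have "B-lipschitz_on (cball x e) h"
  proof (rule bounded_derivative_imp_lipschitz[where f'="\<lambda>y. blinfun_apply (h' y)"])
    fix y assume y: "y \<in> cball x e"
    hence "y \<in> X" using sub by blast
    thus "(h has_derivative blinfun_apply (h' y)) (at y within cball x e)"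
      using d by (blast intro: has_derivative_at_withinI)
    show "onorm (blinfun_apply (h' y)) \<le> B" using B(2)[OF y] by (simp add: norm_blinfun.rep_eq)
  qed (use B in auto)
  thus ?thesis by blast
qed

section \<open>Nearest points of superlevel sets of concave functions\<close>

definition has_supergradient :: "('a::real_inner \<Rightarrow> real) \<Rightarrow> ('a \<Rightarrow> 'a) \<Rightarrow> bool" where
  "has_supergradient c G \<longleftrightarrow> (\<forall>a b. c b \<le> c a + G a \<bullet> (b - a))"

definition nearest_feasible :: "('a::real_normed_vector \<Rightarrow> real) \<Rightarrow> 'a \<Rightarrow> 'a \<Rightarrow> bool" where
  "nearest_feasible c r u \<longleftrightarrow> c u \<ge> 0 \<and> (\<forall>v. c v \<ge> 0 \<longrightarrow> norm (u - r) \<le> norm (v - r))"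

lemma nearest_feasible_exists:
  fixes c :: "'a::euclidean_space \<Rightarrow> real"
  assumes cont: "continuous_on UNIV c" and feasible: "c u0 \<ge> 0"
  obtains u where "nearest_feasible c r u"
proof -
  define K where "K = {v. c v \<ge> 0} \<inter> cball r (norm (u0 - r))"
  have "closed {v. c v \<ge> 0}" using cont by (intro closed_Collect_le) (auto intro: continuous_intros)
  hence "compact K" unfolding K_def by (intro closed_Int_compact) auto
  moreover have "K \<noteq> {}" using feasible by (auto simp: K_def dist_norm norm_minus_commute)
  moreover have "continuous_on K (\<lambda>v. norm (v - r))" by (intro continuous_intros)
  ultimately obtain u where u: "u \<in> K" "\<forall>v\<in>K. norm (u - r) \<le> norm (v - r)"
    using continuous_attains_inf by blast
  have "norm (u - r) \<le> norm (v - r)" if "c v \<ge> 0" for v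
  proof (cases "v \<in> K")
    case False
    hence "norm (v - r) > norm (u0 - r)" using that by (auto simp: K_def dist_norm norm_minus_commute)
    moreover have "norm (u - r) \<le> norm (u0 - r)" using u(1) by (auto simp: K_def dist_norm norm_minus_commute)
    ultimately show ?thesis by simp
  qed (use u in auto)
  thus ?thesis using u(1) that by (auto simp: K_def nearest_feasible_def)
qed

text \<open>The midpoint of two distinct nearest points is feasible by concavity and strictly closer.\<close>

lemma nearest_feasible_unique:
  assumes super: "has_supergradient c G"
    and u1: "nearest_feasible c r u1" and u2: "nearest_feasible c r u2"
  shows "u1 = u2"
proof (rule ccontr)
  assume ne: "u1 \<noteq> u2"
  define w where "w = (1/2) *\<^sub>R (u1 + u2)"
  have "2 *\<^sub>R w = u1 + u2" by (simp add: w_def)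
  hence "(u1 - w) + (u2 - w) = 0" by (simp add: algebra_simps scaleR_2)
  hence "G w \<bullet> (u1 - w) + G w \<bullet> (u2 - w) = 0" by (metis inner_add_right inner_zero_right)
  hence "c w \<ge> 0"
    using super u1 u2 unfolding has_supergradient_def nearest_feasible_def
    by (smt (verit, ccfv_threshold))
  hence le: "norm (u1 - r) \<le> norm (w - r)" using u1 by (simp add: nearest_feasible_def)
  have eq: "norm (u1 - r) = norm (u2 - r)" using u1 u2 by (simp add: nearest_feasible_def order_antisym)
  have "(norm (w - r))\<^sup>2 = ((norm (u1 - r))\<^sup>2 + (norm (u2 - r))\<^sup>2) / 2 - (norm (u1 - u2))\<^sup>2 / 4"
    unfolding power2_norm_eq_inner w_def
    by (simp add: inner_add_left inner_add_right inner_diff_left inner_diff_right inner_commute field_simps)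
  also have "\<dots> < (norm (u1 - r))\<^sup>2" using eq ne by simp
  finally have "norm (w - r) < norm (u1 - r)" by (simp add: power_less_imp_less_base)
  with le show False by simp
qed

lemma nearest_feasible_first_order:
  assumes deriv: "((\<lambda>t. c (u + t *\<^sub>R d)) has_real_derivative g) (at 0)"
    and u: "nearest_feasible c r u" and descent: "c u > 0 \<or> g > 0"
  shows "(u - r) \<bullet> d \<ge> 0"
proof (rule ccontr)
  assume "\<not> (u - r) \<bullet> d \<ge> 0"
  hence neg: "(u - r) \<bullet> d < 0" by simp
  define \<phi> where "\<phi> t = (norm (u + t *\<^sub>R d - r))\<^sup>2" for t :: real
  have \<phi>_eq: "\<phi> t = (u - r) \<bullet> (u - r) + 2 * t * ((u - r) \<bullet> d) + t\<^sup>2 * (d \<bullet> d)" for t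
    unfolding \<phi>_def power2_norm_eq_inner
    by (simp add: inner_add_left inner_add_right inner_diff_left inner_diff_right inner_commute
        power2_eq_square algebra_simps)
  have "(\<phi> has_real_derivative 2 * ((u - r) \<bullet> d)) (at 0)"
    unfolding \<phi>_eq[abs_def] by (auto intro!: derivative_eq_intros)
  from DERIV_neg_dec_right[OF this] neg
  obtain d1 where d1: "d1 > 0" "\<And>h. 0 < h \<Longrightarrow> h < d1 \<Longrightarrow> \<phi> h < \<phi> 0" by auto
  obtain d2 where d2: "d2 > 0" "\<And>h. 0 < h \<Longrightarrow> h < d2 \<Longrightarrow> c (u + h *\<^sub>R d) \<ge> 0"
  proof (cases "c u > 0")
    case True
    have "isCont (\<lambda>t. c (u + t *\<^sub>R d)) 0" using deriv by (rule DERIV_isCont)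
    then obtain e where e: "e > 0" "\<And>t. dist t 0 < e \<Longrightarrow> dist (c (u + t *\<^sub>R d)) (c u) < c u"
      unfolding continuous_at_eps_delta using True by fastforce
    have "c (u + h *\<^sub>R d) \<ge> 0" if "0 < h" "h < e" for h
      using e(2)[of h] that by (auto simp: dist_real_def abs_less_iff)
    thus ?thesis using that e(1) by blast
  next
    case False
    from DERIV_pos_inc_right[OF deriv] False descent
    obtain e where e: "e > 0" "\<And>h. 0 < h \<Longrightarrow> h < e \<Longrightarrow> c u < c (u + h *\<^sub>R d)" by auto
    have "c u \<ge> 0" using u by (simp add: nearest_feasible_def)
    hence "c (u + h *\<^sub>R d) \<ge> 0" if "0 < h" "h < e" for h using e(2)[OF that] by linarith
    thus ?thesis using that e(1) by blast
  qed
  define h where "h = min d1 d2 / 2"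
  have h: "0 < h" "h < d1" "h < d2" using d1 d2 by (auto simp: h_def)
  have "norm (u - r) \<le> norm (u + h *\<^sub>R d - r)" using u d2(2)[OF h(1,3)] by (simp add: nearest_feasible_def)
  hence "\<phi> 0 \<le> \<phi> h" by (simp add: \<phi>_def power_mono)
  with d1(2)[OF h(1,2)] show False by simp
qed

lemma nonneg_on_halfspace_imp_nonneg_multiple:
  fixes e g :: "'a::real_inner"
  assumes "g \<noteq> 0" and nonneg: "\<And>d. g \<bullet> d > 0 \<Longrightarrow> e \<bullet> d \<ge> 0"
  obtains \<mu> where "\<mu> \<ge> 0" "e = \<mu> *\<^sub>R g"
proof -
  have gg: "g \<bullet> g > 0" using assms(1) by simp
  define \<mu> where "\<mu> = (e \<bullet> g) / (g \<bullet> g)"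
  define e' where "e' = e - \<mu> *\<^sub>R g"
  have e'g: "g \<bullet> e' = 0" using gg by (simp add: e'_def \<mu>_def inner_diff_right inner_commute)
  have eg: "e \<bullet> g \<ge> 0" using nonneg gg by blast
  have "e' = 0"
  proof (rule ccontr)
    assume "e' \<noteq> 0"
    define t where "t = (e \<bullet> g + 1) / (e' \<bullet> e')"
    have "e' \<bullet> e' > 0" using \<open>e' \<noteq> 0\<close> by simp
    have "g \<bullet> (g - t *\<^sub>R e') > 0" using gg e'g by (simp add: inner_diff_right)
    hence "e \<bullet> (g - t *\<^sub>R e') \<ge> 0" by (rule nonneg)
    moreover have "e \<bullet> e' = e' \<bullet> e'"
      using e'g by (simp add: e'_def inner_diff_left inner_commute)
    ultimately show False
      using \<open>e' \<bullet> e' > 0\<close> by (simp add: inner_diff_right t_def)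
  qed
  hence "e = \<mu> *\<^sub>R g" by (simp add: e'_def)
  moreover have "\<mu> \<ge> 0" using eg gg by (simp add: \<mu>_def)
  ultimately show ?thesis by (rule that[rotated])
qed

lemma nearest_feasible_KKT:
  assumes deriv: "\<And>d. ((\<lambda>t. c (u + t *\<^sub>R d)) has_real_derivative g \<bullet> d) (at 0)"
    and u: "nearest_feasible c r u"
    and slater: "c u0 > 0" and super: "c u0 \<le> c u + g \<bullet> (u0 - u)"
  obtains \<mu> where "\<mu> \<ge> 0" "u - r = \<mu> *\<^sub>R g" "\<mu> * c u = 0"
proof (cases "c u > 0")
  case True
  have "(u - r) \<bullet> (- (u - r)) \<ge> 0" using nearest_feasible_first_order[OF deriv u] True by blast
  hence "(u - r) \<bullet> (u - r) \<le> 0" by (simp only: inner_minus_right neg_0_le_iff_le)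
  hence "u - r = 0" by (metis inner_eq_zero_iff inner_ge_zero order_antisym)
  thus ?thesis using that[of 0] by simp
next
  case False
  hence cu: "c u = 0" using u by (simp add: nearest_feasible_def)
  hence "g \<noteq> 0" using slater super by auto
  then obtain \<mu> where "\<mu> \<ge> 0" "u - r = \<mu> *\<^sub>R g"
    using nearest_feasible_first_order[OF deriv u] nonneg_on_halfspace_imp_nonneg_multiple by metis
  thus ?thesis using that cu by simp
qed

lemma le_of_square_le_quadratic:
  fixes D d A B :: real
  assumes "D \<ge> 0" "d \<ge> 0" "A \<ge> 0" "B \<ge> 0" and sq: "D\<^sup>2 \<le> A * D * d + B * d\<^sup>2"
  shows "D \<le> (A + B + 1) * d"
proof (rule ccontr)
  assume "\<not> ?thesis"
  hence gt: "D > (A + B + 1) * d" by simp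
  moreover have "(A + B) * d \<ge> 0" using assms by simp
  ultimately have "D \<ge> d" by (simp add: algebra_simps)
  hence "B * d\<^sup>2 \<le> B * d * D" using assms by (simp add: power2_eq_square mult_left_mono mult.assoc)
  moreover have "(A + B) * d * D < D * D"
  proof (rule mult_strict_right_mono)
    have "(A + B) * d \<ge> 0" using assms by simp
    thus "(A + B) * d < D" "0 < D" using gt assms(2) by (simp_all add: algebra_simps)
  qed
  ultimately show False using sq by (simp add: power2_eq_square algebra_simps)
qed

lemma KKT_perturbation_bound:
  fixes u1 u2 r1 r2 :: "'a::real_inner"
  assumes KKT1: "c1 u1 \<ge> 0" "m1 \<ge> 0" "m1 * c1 u1 = 0" "u1 - r1 = m1 *\<^sub>R G1 u1"
    and KKT2: "c2 u2 \<ge> 0" "m2 \<ge> 0" "m2 * c2 u2 = 0" "u2 - r2 = m2 *\<^sub>R G2 u2"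
    and super: "has_supergradient c2 G2"
  shows "(norm (u1 - u2))\<^sup>2 \<le> (u1 - u2) \<bullet> (r1 - r2) + m1 * ((G1 u1 - G2 u1) \<bullet> (u1 - u2))
           + (m1 - m2) * (c2 u1 - c1 u1)"
proof -
  have "c2 u2 \<le> c2 u1 + G2 u1 \<bullet> (u2 - u1)" and c2_u2: "c2 u1 \<le> c2 u2 + G2 u2 \<bullet> (u1 - u2)"
    using super by (simp_all add: has_supergradient_def)
  moreover have "G2 u1 \<bullet> (u2 - u1) = - (G2 u1 \<bullet> (u1 - u2))" by (simp add: inner_diff_right)
  ultimately have c2_u1: "G2 u1 \<bullet> (u1 - u2) \<le> c2 u1 - c2 u2" by linarith
  have "(norm (u1 - u2))\<^sup>2 = (u1 - u2) \<bullet> ((r1 - r2) + (m1 *\<^sub>R G1 u1 - m2 *\<^sub>R G2 u2))"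
    unfolding power2_norm_eq_inner using KKT1(4) KKT2(4) by (simp add: algebra_simps)
  also have "\<dots> = (u1 - u2) \<bullet> (r1 - r2) + m1 * ((G1 u1 - G2 u1) \<bullet> (u1 - u2))
      + m1 * (G2 u1 \<bullet> (u1 - u2)) - m2 * (G2 u2 \<bullet> (u1 - u2))"
    by (simp add: inner_add_right inner_diff_right inner_diff_left inner_commute algebra_simps)
  finally have eq: "(norm (u1 - u2))\<^sup>2 = \<dots>" .
  have "m1 * (G2 u1 \<bullet> (u1 - u2)) \<le> m1 * c2 u1 - m1 * c2 u2"
    using mult_left_mono[OF c2_u1 KKT1(2)] by (simp add: right_diff_distrib)
  moreover have "m2 * c2 u1 \<le> m2 * c2 u2 + m2 * (G2 u2 \<bullet> (u1 - u2))"
    using mult_left_mono[OF c2_u2 KKT2(2)] by (simp add: distrib_left)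
  moreover have "m1 * c2 u2 \<ge> 0" "m2 * c1 u1 \<ge> 0"
    using KKT1(1,2) KKT2(1,2) by simp_all
  moreover have "(m1 - m2) * (c2 u1 - c1 u1) = m1 * c2 u1 - m1 * c1 u1 - m2 * c2 u1 + m2 * c1 u1"
    by algebra
  ultimately show ?thesis
    unfolding eq using KKT1(3) KKT2(3) by linarith
qed

lemma scaleR_coefficient_le:
  fixes G :: "'a::real_normed_vector"
  assumes "m \<ge> 0" "m > 0 \<Longrightarrow> norm G \<ge> g0" "g0 > 0"
  shows "m \<le> norm (m *\<^sub>R G) / g0"
proof (cases "m = 0")
  case False
  hence "m * g0 \<le> m * norm G" using assms by (intro mult_left_mono) auto
  thus ?thesis using assms by (simp add: pos_le_divide_eq)
qed simp

lemma scaleR_coefficient_diff_le: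
  fixes G1 G2 :: "'a::real_normed_vector"
  assumes m: "m1 \<ge> 0" "m2 \<ge> 0" "m2 \<le> M" and g0: "g0 > 0"
    and G1: "m1 > 0 \<Longrightarrow> norm G1 \<ge> g0" and G2: "m2 > 0 \<Longrightarrow> norm G2 \<ge> g0"
  shows "\<bar>m1 - m2\<bar> \<le> (norm (m1 *\<^sub>R G1 - m2 *\<^sub>R G2) + M * norm (G1 - G2)) / g0"
proof -
  have MG: "0 \<le> M * norm (G1 - G2) / g0" using m g0 by simp
  consider "m1 = 0" | "m2 = 0" | "m1 > 0" "m2 > 0" using m by linarith
  then show ?thesis
  proof cases
    case 1
    thus ?thesis using scaleR_coefficient_le[OF m(2) G2 g0] m(2) MG by (simp add: add_divide_distrib)
  next
    case 2
    thus ?thesis using scaleR_coefficient_le[OF m(1) G1 g0] m(1) MG by (simp add: add_divide_distrib)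
  next
    case 3
    have G1p: "norm G1 > 0" using G1 g0 3 by fastforce
    have "m1 - m2 = ((norm (m1 *\<^sub>R G1) - norm (m2 *\<^sub>R G2)) + m2 * (norm G2 - norm G1)) / norm G1"
      using G1p 3 by (simp add: field_simps)
    hence "\<bar>m1 - m2\<bar> = \<bar>(norm (m1 *\<^sub>R G1) - norm (m2 *\<^sub>R G2)) + m2 * (norm G2 - norm G1)\<bar> / norm G1"
      by simp
    also have "\<dots> \<le> (norm (m1 *\<^sub>R G1 - m2 *\<^sub>R G2) + M * norm (G1 - G2)) / norm G1"
    proof (rule divide_right_mono)
      have "\<bar>m2 * (norm G2 - norm G1)\<bar> \<le> M * norm (G1 - G2)"
        using m norm_triangle_ineq3[of G2 G1]
        by (simp add: abs_mult norm_minus_commute mult_mono)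
      thus "\<bar>(norm (m1 *\<^sub>R G1) - norm (m2 *\<^sub>R G2)) + m2 * (norm G2 - norm G1)\<bar>
          \<le> norm (m1 *\<^sub>R G1 - m2 *\<^sub>R G2) + M * norm (G1 - G2)"
        using norm_triangle_ineq3[of "m1 *\<^sub>R G1" "m2 *\<^sub>R G2"] by linarith
    qed simp
    also have "\<dots> \<le> (norm (m1 *\<^sub>R G1 - m2 *\<^sub>R G2) + M * norm (G1 - G2)) / g0"
      using G1 3 g0 MG G1p by (intro divide_left_mono) (auto simp: zero_le_divide_iff)
    finally show ?thesis .
  qed
qed

lemma KKT_solutions_close:
  fixes u1 u2 r1 r2 :: "'a::real_inner"
  defines "D \<equiv> norm (u1 - u2)"
  assumes KKT1: "c1 u1 \<ge> 0" "m1 \<ge> 0" "m1 * c1 u1 = 0" "u1 - r1 = m1 *\<^sub>R G1 u1"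
    and KKT2: "c2 u2 \<ge> 0" "m2 \<ge> 0" "m2 * c2 u2 = 0" "u2 - r2 = m2 *\<^sub>R G2 u2"
    and super: "has_supergradient c2 G2"
    and m_le: "m1 \<le> M" "m2 \<le> M" and g0: "g0 > 0"
    and boundary: "m1 > 0 \<Longrightarrow> norm (G1 u1) \<ge> g0" "m2 > 0 \<Longrightarrow> norm (G2 u2) \<ge> g0"
    and r_diff: "norm (r1 - r2) \<le> Lr * d" and c_diff: "\<bar>c2 u1 - c1 u1\<bar> \<le> Lc * d"
    and G_diff: "norm (G1 u1 - G2 u1) \<le> LG * d" and G_diff_arg: "norm (G2 u1 - G2 u2) \<le> LG * D"
    and nonneg: "d \<ge> 0" "Lr \<ge> 0" "Lc \<ge> 0" "LG \<ge> 0"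
  shows "D \<le> (Lr + M * LG + (1 + M * LG) * (Lc / g0) + (Lr + M * LG) * (Lc / g0) + 1) * d"
proof -
  have D0: "D \<ge> 0" and M0: "M \<ge> 0" using KKT2(2) m_le(2) by (simp_all add: D_def)
  have "\<bar>m1 - m2\<bar> \<le> (norm (m1 *\<^sub>R G1 u1 - m2 *\<^sub>R G2 u2) + M * norm (G1 u1 - G2 u2)) / g0"
    using KKT1(2) KKT2(2) m_le(2) g0 boundary by (rule scaleR_coefficient_diff_le)
  also have "\<dots> \<le> (D + Lr * d + M * (LG * d + LG * D)) / g0"
  proof (intro divide_right_mono add_mono mult_left_mono)
    have "m1 *\<^sub>R G1 u1 - m2 *\<^sub>R G2 u2 = (u1 - u2) - (r1 - r2)"
      using KKT1(4) KKT2(4) by (simp add: algebra_simps flip: KKT1(4) KKT2(4))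
    thus "norm (m1 *\<^sub>R G1 u1 - m2 *\<^sub>R G2 u2) \<le> D + Lr * d"
      using norm_triangle_ineq4[of "u1 - u2" "r1 - r2"] r_diff by (simp add: D_def)
    show "norm (G1 u1 - G2 u2) \<le> LG * d + LG * D"
      using norm_triangle_ineq[of "G1 u1 - G2 u1" "G2 u1 - G2 u2"] G_diff G_diff_arg by simp
  qed (use g0 M0 in auto)
  finally have m_diff: "\<bar>m1 - m2\<bar> \<le> (D + Lr * d + M * (LG * d + LG * D)) / g0" .
  have "(u1 - u2) \<bullet> (r1 - r2) \<le> D * (Lr * d)"
    using Cauchy_Schwarz_ineq2[of "u1 - u2" "r1 - r2"] r_diff D0 unfolding D_def
    by (smt (verit) mult_left_mono)
  moreover have "m1 * ((G1 u1 - G2 u1) \<bullet> (u1 - u2)) \<le> M * (LG * d * D)"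
  proof -
    have "(G1 u1 - G2 u1) \<bullet> (u1 - u2) \<le> LG * d * D"
      using Cauchy_Schwarz_ineq2[of "G1 u1 - G2 u1" "u1 - u2"] G_diff D0 unfolding D_def
      by (smt (verit) mult_right_mono)
    thus ?thesis using m_le(1) KKT1(2) nonneg D0
      by (smt (verit) mult_left_mono mult_nonneg_nonneg mult_right_mono)
  qed
  moreover have "(m1 - m2) * (c2 u1 - c1 u1) \<le> \<bar>m1 - m2\<bar> * \<bar>c2 u1 - c1 u1\<bar>"
    by (metis abs_ge_self abs_mult)
  moreover have "\<dots> \<le> (D + Lr * d + M * (LG * d + LG * D)) / g0 * (Lc * d)"
    using m_diff c_diff by (intro mult_mono) (auto intro: order_trans[OF abs_ge_zero])
  moreover have "D * (Lr * d) + M * (LG * d * D) + (D + Lr * d + M * (LG * d + LG * D)) / g0 * (Lc * d)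
      = (Lr + M * LG + (1 + M * LG) * (Lc / g0)) * D * d + (Lr + M * LG) * (Lc / g0) * d\<^sup>2"
    by (simp add: power2_eq_square divide_inverse algebra_simps)
  ultimately have "D\<^sup>2 \<le> (Lr + M * LG + (1 + M * LG) * (Lc / g0)) * D * d + (Lr + M * LG) * (Lc / g0) * d\<^sup>2"
    using KKT_perturbation_bound[where ?c1.0=c1 and ?G1.0=G1, OF KKT1 KKT2 super] unfolding D_def by linarith
  thus ?thesis
    using D0 nonneg M0 g0 by (intro le_of_square_le_quadratic) auto
qed

lemma KKT_solution_lipschitz:
  fixes c :: "'y::metric_space \<Rightarrow> 'a::real_inner \<Rightarrow> real" and G :: "'y \<Rightarrow> 'a \<Rightarrow> 'a"
    and r u :: "'y \<Rightarrow> 'a"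
  assumes KKT: "\<And>y. y \<in> Y \<Longrightarrow>
        c y (u y) \<ge> 0 \<and> mu y \<ge> 0 \<and> mu y * c y (u y) = 0 \<and> u y - r y = mu y *\<^sub>R G y (u y)"
    and super: "\<And>y. y \<in> Y \<Longrightarrow> has_supergradient (c y) (G y)"
    and u_bound: "\<And>y. y \<in> Y \<Longrightarrow> norm (u y) \<le> \<rho>"
    and r_bound: "\<And>y. y \<in> Y \<Longrightarrow> norm (r y) \<le> R"
    and r_lip: "Lr-lipschitz_on Y r"
    and c_lip: "Lc-lipschitz_on (Y \<times> cball 0 \<rho>) (\<lambda>(y, a). c y a)"
    and G_lip: "LG-lipschitz_on (Y \<times> cball 0 \<rho>) (\<lambda>(y, a). G y a)"
    and G_boundary: "\<And>y a. y \<in> Y \<Longrightarrow> norm a \<le> \<rho> \<Longrightarrow> c y a = 0 \<Longrightarrow> norm (G y a) \<ge> g0"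
    and g0: "g0 > 0"
  shows "\<exists>L. L-lipschitz_on Y u"
proof -
  have nonneg: "Lr \<ge> 0" "Lc \<ge> 0" "LG \<ge> 0"
    using lipschitz_on_nonneg r_lip c_lip G_lip by auto
  have boundary: "mu y > 0 \<Longrightarrow> norm (G y (u y)) \<ge> g0" if "y \<in> Y" for y
    using KKT[OF that] G_boundary[OF that u_bound[OF that]] by simp
  have mu_le: "mu y \<le> (\<rho> + R) / g0" if y: "y \<in> Y" for y
  proof -
    have "mu y \<le> norm (u y - r y) / g0"
      using KKT[OF y] boundary[OF y] g0 by (metis scaleR_coefficient_le)
    also have "\<dots> \<le> (\<rho> + R) / g0"
      using norm_triangle_ineq4[of "u y" "r y"] u_bound[OF y] r_bound[OF y] g0
      by (intro divide_right_mono) auto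
    finally show ?thesis .
  qed
  define L where "L = Lr + (\<rho> + R) / g0 * LG + (1 + (\<rho> + R) / g0 * LG) * (Lc / g0)
      + (Lr + (\<rho> + R) / g0 * LG) * (Lc / g0) + 1"
  have lip: "dist (u y1) (u y2) \<le> L * dist y1 y2" if y: "y1 \<in> Y" "y2 \<in> Y" for y1 y2
    unfolding dist_norm[of "u y1"] L_def
  proof (rule KKT_solutions_close[where ?c1.0="c y1" and ?c2.0="c y2" and ?G1.0="G y1" and ?G2.0="G y2"
        and ?m1.0="mu y1" and ?m2.0="mu y2" and M="(\<rho> + R) / g0" and ?r1.0="r y1" and ?r2.0="r y2"])
    show "norm (r y1 - r y2) \<le> Lr * dist y1 y2"
      using lipschitz_onD[OF r_lip y] by (simp add: dist_norm)
    show "norm (G y1 (u y1) - G y2 (u y1)) \<le> LG * dist y1 y2"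
      using lipschitz_onD[OF G_lip, of "(y1, u y1)" "(y2, u y1)"] y u_bound[OF y(1)]
      by (simp add: dist_norm dist_Pair_Pair)
    show "norm (G y2 (u y1) - G y2 (u y2)) \<le> LG * norm (u y1 - u y2)"
      using lipschitz_onD[OF G_lip, of "(y2, u y1)" "(y2, u y2)"] y u_bound[OF y(1)] u_bound[OF y(2)]
      by (simp add: dist_norm dist_Pair_Pair)
    show "\<bar>c y2 (u y1) - c y1 (u y1)\<bar> \<le> Lc * dist y1 y2"
      using lipschitz_onD[OF c_lip, of "(y2, u y1)" "(y1, u y1)"] y u_bound[OF y(1)]
      by (simp add: dist_real_def dist_Pair_Pair dist_commute)
  qed (use KKT y super mu_le boundary g0 nonneg in auto)
  show ?thesis
  proof (cases "Y = {}")
    case False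
    then obtain y0 where "y0 \<in> Y" by blast
    hence "\<rho> \<ge> 0" "R \<ge> 0" using u_bound r_bound norm_ge_zero order_trans by blast+
    hence "L \<ge> 0" using nonneg g0 by (simp add: L_def)
    thus ?thesis using lip by (blast intro: lipschitz_onI)
  qed auto
qed

lemma nearest_feasible_norm_le:
  assumes "nearest_feasible c r u" "c u0 \<ge> 0"
  shows "norm u \<le> 2 * norm r + norm u0"
proof -
  have "norm (u - r) \<le> norm (u0 - r)" using assms by (simp add: nearest_feasible_def)
  thus ?thesis using norm_triangle_ineq4[of u0 r] norm_triangle_ineq2[of u r] by linarith
qed

lemma supergradient_large_on_boundary:
  assumes "has_supergradient c G" "c u0 \<ge> 1" "c a = 0"
  shows "1 \<le> norm (G a) * norm (u0 - a)"
proof -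
  have "1 \<le> c a + G a \<bullet> (u0 - a)" using assms by (smt (verit) has_supergradient_def)
  thus ?thesis using assms(3) norm_cauchy_schwarz[of "G a" "u0 - a"] by linarith
qed

lemma nearest_feasible_ex1:
  fixes c :: "'a::euclidean_space \<Rightarrow> real"
  assumes "continuous_on UNIV c" "has_supergradient c G" "c u0 \<ge> 0"
  shows "\<exists>!u. nearest_feasible c r u"
  using nearest_feasible_exists[OF assms(1,3)] nearest_feasible_unique[OF assms(2)] by metis

lemma nearest_feasible_lipschitz:
  fixes c :: "'y::metric_space \<Rightarrow> 'a::euclidean_space \<Rightarrow> real" and G :: "'y \<Rightarrow> 'a \<Rightarrow> 'a"
    and r :: "'y \<Rightarrow> 'a"
  assumes cont: "\<And>y. y \<in> Y \<Longrightarrow> continuous_on UNIV (c y)"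
    and super: "\<And>y. y \<in> Y \<Longrightarrow> has_supergradient (c y) (G y)"
    and deriv: "\<And>y u d. y \<in> Y \<Longrightarrow> ((\<lambda>t. c y (u + t *\<^sub>R d)) has_real_derivative G y u \<bullet> d) (at 0)"
    and slater: "\<And>y. y \<in> Y \<Longrightarrow> c y u0 \<ge> 1"
    and r_bound: "\<And>y. y \<in> Y \<Longrightarrow> norm (r y) \<le> R" and r_lip: "Lr-lipschitz_on Y r"
    and c_lip: "\<And>\<rho>. \<exists>L. L-lipschitz_on (Y \<times> cball 0 \<rho>) (\<lambda>(y, a). c y a)"
    and G_lip: "\<And>\<rho>. \<exists>L. L-lipschitz_on (Y \<times> cball 0 \<rho>) (\<lambda>(y, a). G y a)"
  shows "(\<forall>y\<in>Y. \<exists>!u. nearest_feasible (c y) (r y) u) \<and>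
    (\<exists>L. L-lipschitz_on Y (\<lambda>y. THE u. nearest_feasible (c y) (r y) u))"
proof
  show unique: "\<forall>y\<in>Y. \<exists>!u. nearest_feasible (c y) (r y) u"
    using cont super slater by (meson nearest_feasible_ex1 order_trans zero_le_one)
  define u where "u y = (THE u. nearest_feasible (c y) (r y) u)" for y
  have u: "nearest_feasible (c y) (r y) (u y)" if "y \<in> Y" for y
    using theI'[of "nearest_feasible (c y) (r y)"] unique that by (simp add: u_def)
  have "\<exists>\<mu>. \<mu> \<ge> 0 \<and> u y - r y = \<mu> *\<^sub>R G y (u y) \<and> \<mu> * c y (u y) = 0" if y: "y \<in> Y" for y
  proof -
    have "c y u0 > 0" using slater[OF y] by simp
    moreover have "c y u0 \<le> c y (u y) + G y (u y) \<bullet> (u0 - u y)"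
      using super[OF y] by (simp add: has_supergradient_def)
    ultimately show ?thesis by (metis nearest_feasible_KKT[OF deriv[OF y] u[OF y]])
  qed
  then obtain mu where KKT: "\<And>y. y \<in> Y \<Longrightarrow>
      c y (u y) \<ge> 0 \<and> mu y \<ge> 0 \<and> mu y * c y (u y) = 0 \<and> u y - r y = mu y *\<^sub>R G y (u y)"
    using u unfolding nearest_feasible_def by metis
  define \<rho> where "\<rho> = 2 * \<bar>R\<bar> + norm u0"
  have u_bound: "norm (u y) \<le> \<rho>" if y: "y \<in> Y" for y
    using nearest_feasible_norm_le[OF u[OF y], of u0] slater[OF y] r_bound[OF y] by (simp add: \<rho>_def)
  define g0 where "g0 = 1 / (norm u0 + \<rho> + 1)"
  have pos: "norm u0 + \<rho> + 1 > 0" unfolding \<rho>_def using norm_ge_zero[of u0] by linarith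
  have G_boundary: "norm (G y a) \<ge> g0" if y: "y \<in> Y" and a: "norm a \<le> \<rho>" and ca: "c y a = 0" for y a
  proof -
    have "1 \<le> norm (G y a) * norm (u0 - a)"
      using supergradient_large_on_boundary[OF super[OF y] slater[OF y] ca] .
    also have "\<dots> \<le> norm (G y a) * (norm u0 + \<rho> + 1)"
      using norm_triangle_ineq4[of u0 a] a by (intro mult_left_mono) auto
    finally show ?thesis using pos by (simp add: g0_def pos_divide_le_eq)
  qed
  obtain Lc LG where "Lc-lipschitz_on (Y \<times> cball 0 \<rho>) (\<lambda>(y, a). c y a)"
    "LG-lipschitz_on (Y \<times> cball 0 \<rho>) (\<lambda>(y, a). G y a)"
    using c_lip G_lip by metis
  moreover have "g0 > 0" using pos by (simp add: g0_def)
  ultimately show "\<exists>L. L-lipschitz_on Y u"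
    by (intro KKT_solution_lipschitz[OF KKT super u_bound r_bound r_lip _ _ G_boundary]) auto
qed

section \<open>Augmented vectors\<close>

definition aug0 :: "real^'m \<Rightarrow> real^('m option)" where
  "aug0 d = (\<chi> i. case i of None \<Rightarrow> 0 | Some j \<Rightarrow> d $ j)"

definition unaug :: "real^('m option) \<Rightarrow> real^'m" where
  "unaug v = (\<chi> j. v $ Some j)"

lemma sum_UNIV_option:
  fixes f :: "'m::finite option \<Rightarrow> 'a::comm_monoid_add"
  shows "(\<Sum>i\<in>UNIV. f i) = f None + (\<Sum>j\<in>UNIV. f (Some j))"
proof -
  have "(\<Sum>i\<in>UNIV. f i) = f None + (\<Sum>i\<in>range Some. f i)"
    by (subst UNIV_option_conv) (rule sum.insert; auto)
  also have "(\<Sum>i\<in>range Some. f i) = (\<Sum>j\<in>UNIV. f (Some j))"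
    by (simp add: sum.reindex)
  finally show ?thesis .
qed

lemma aug_nth [simp]: "aug u $ None = 1" "aug u $ Some j = u $ j"
  by (simp_all add: aug_def)

lemma aug0_nth [simp]: "aug0 d $ None = 0" "aug0 d $ Some j = d $ j"
  by (simp_all add: aug0_def)

lemma unaug_nth [simp]: "unaug v $ j = v $ Some j"
  by (simp add: unaug_def)

lemma unaug_aug [simp]: "unaug (aug u) = u" and unaug_aug0 [simp]: "unaug (aug0 d) = d"
  by (simp_all add: vec_eq_iff)

lemma inner_option: "v \<bullet> w = v $ None * w $ None + unaug v \<bullet> unaug w"
  by (simp add: inner_vec_def sum_UNIV_option)

lemma inner_aug: "v \<bullet> aug u = v $ None + unaug v \<bullet> u"
  by (simp add: inner_option)

lemma inner_aug0: "v \<bullet> aug0 d = unaug v \<bullet> d"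
  by (simp add: inner_option)

lemma aug_add_scaleR: "aug (u + t *\<^sub>R d) = aug u + t *\<^sub>R aug0 d"
  by (simp add: vec_eq_iff aug_def aug0_def split: option.splits)

lemma aug_diff: "aug a - aug b = aug0 (a - b)"
  by (simp add: vec_eq_iff aug_def aug0_def split: option.splits)

lemma aug0_minus: "aug0 (- d) = - aug0 d"
  by (simp add: vec_eq_iff aug_def aug0_def split: option.splits)

lemma aug0_0 [simp]: "aug0 0 = 0"
  by (simp add: vec_eq_iff aug_def aug0_def split: option.splits)

lemma aug_eq_axis_add_aug0: "aug u = axis None 1 + aug0 u"
  by (simp add: vec_eq_iff aug_def aug0_def axis_def split: option.splits)

lemma norm_aug0 [simp]: "norm (aug0 d) = norm d"
  by (simp add: norm_eq_sqrt_inner inner_aug0)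

lemma norm_aug_squared: "(norm (aug u))\<^sup>2 = 1 + (norm u)\<^sup>2"
  by (simp add: power2_norm_eq_inner inner_option)

lemma aug_nonzero: "aug u \<noteq> 0"
  by (metis aug_nth(1) zero_index zero_neq_one)

lemma unaug_diff: "unaug v - unaug w = unaug (v - w)"
  by (simp add: vec_eq_iff)

lemma norm_unaug_le: "norm (unaug v) \<le> norm v"
proof -
  have "(norm (unaug v))\<^sup>2 \<le> (norm v)\<^sup>2"
    by (simp add: power2_norm_eq_inner inner_option[of v v])
  thus ?thesis by (rule power2_le_imp_le) simp
qed

lemma lipschitz_on_aug: "1-lipschitz_on U aug"
  by (rule lipschitz_onI) (simp_all add: dist_norm aug_diff)

lemma lipschitz_on_unaug: "1-lipschitz_on U unaug"
  by (rule lipschitz_onI) (simp_all add: dist_norm unaug_diff norm_unaug_le)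

lemma quad_form_aug0_eq_lower_block:
  "quad_form (\<chi> i j. S $ Some i $ Some j) v = quad_form S (aug0 v)"
proof -
  have "(\<chi> i j. S $ Some i $ Some j) *v v = unaug (S *v aug0 v)"
    by (simp add: vec_eq_iff matrix_vector_mult_def sum_UNIV_option)
  thus ?thesis by (metis inner_aug0 inner_commute quad_form_def)
qed

lemma quad_form_outer: "quad_form (\<chi> i j. g $ i * g $ j) v = (g \<bullet> v)\<^sup>2"
proof -
  have "(\<chi> i j. g $ i * g $ j) *v v = (g \<bullet> v) *\<^sub>R g"
    by (simp add: vec_eq_iff matrix_vector_mult_def inner_vec_def sum_distrib_left mult_ac)
  thus ?thesis by (simp add: quad_form_def power2_eq_square inner_commute)
qed

section \<open>The second-order cone constraint\<close>

definition socp_constraint ::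
  "real \<Rightarrow> real \<Rightarrow> real^'m \<Rightarrow> real^('m option)^('m option) \<Rightarrow> real^'m \<Rightarrow> real" where
  "socp_constraint \<beta> a p S u = a + p \<bullet> u - \<beta> * sqrt (quad_form S (aug u))"

definition socp_supergradient ::
  "real \<Rightarrow> real^'m \<Rightarrow> real^('m option)^('m option) \<Rightarrow> real^'m \<Rightarrow> real^'m" where
  "socp_supergradient \<beta> p S u = p - (\<beta> / sqrt (quad_form S (aug u))) *\<^sub>R unaug (S *v aug u)"

lemma continuous_on_socp_constraint: "continuous_on UNIV (socp_constraint \<beta> a p S)"
proof -
  have aug: "continuous_on UNIV aug" by (rule lipschitz_on_continuous_on[OF lipschitz_on_aug])
  have "continuous_on UNIV (\<lambda>u. S *v aug u)"
    by (rule continuous_on_compose2[OF matrix_vector_mult_linear_continuous_on aug]) auto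
  hence "continuous_on UNIV (\<lambda>u. quad_form S (aug u))"
    unfolding quad_form_def by (rule continuous_on_inner[OF aug])
  thus ?thesis unfolding socp_constraint_def[abs_def]
    by (intro continuous_intros continuous_on_compose2[OF continuous_on_real_sqrt]) auto
qed

lemma socp_constraint_line_derivative:
  assumes sym: "transpose S = S" and pos: "quad_form S (aug u) > 0"
  shows "((\<lambda>t. socp_constraint \<beta> a p S (u + t *\<^sub>R d)) has_real_derivative
      socp_supergradient \<beta> p S u \<bullet> d) (at 0)"
proof -
  define Q0 b c2 where "Q0 = quad_form S (aug u)" and "b = aug u \<bullet> (S *v aug0 d)"
    and "c2 = quad_form S (aug0 d)"
  have line: "socp_constraint \<beta> a p S (u + t *\<^sub>R d)
      = a + p \<bullet> u + t * (p \<bullet> d) - \<beta> * sqrt (Q0 + 2 * t * b + t\<^sup>2 * c2)" for t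
    unfolding socp_constraint_def aug_add_scaleR quad_form_add_scaleR[OF sym] Q0_def b_def c2_def
    by (simp add: inner_add_right)
  have "((\<lambda>t. a + p \<bullet> u + t * (p \<bullet> d) - \<beta> * sqrt (Q0 + 2 * t * b + t\<^sup>2 * c2)) has_real_derivative
      p \<bullet> d - \<beta> * (b / sqrt Q0)) (at 0)"
    using pos unfolding Q0_def[symmetric]
    by (auto intro!: derivative_eq_intros simp: field_simps)
  moreover have "unaug (S *v aug u) \<bullet> d = b"
    using inner_matrix_vector_symmetric[OF sym, of "aug u" "aug0 d"] inner_aug0[of "S *v aug u" d]
    by (simp add: b_def inner_commute)
  ultimately show ?thesis
    unfolding line socp_supergradient_def Q0_def[symmetric]
    by (simp add: inner_diff_left algebra_simps)
qed

lemma socp_constraint_has_supergradient: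
  assumes sym: "transpose S = S" and pd: "\<And>w. w \<noteq> 0 \<Longrightarrow> quad_form S w > 0" and "\<beta> \<ge> 0"
  shows "has_supergradient (socp_constraint \<beta> a p S) (socp_supergradient \<beta> p S)"
  unfolding has_supergradient_def
proof (intro allI)
  fix u v
  have psd: "quad_form S z \<ge> 0" for z using pd[of z] by (cases "z = 0") (auto simp: quad_form_def)
  define qu qv where "qu = quad_form S (aug u)" and "qv = quad_form S (aug v)"
  have qu: "qu > 0" using pd[OF aug_nonzero] by (simp add: qu_def)
  have "unaug (S *v aug u) \<bullet> (v - u) = (S *v aug u) \<bullet> (aug v - aug u)"
    by (simp add: inner_aug0 aug_diff)
  also have "\<dots> = aug v \<bullet> (S *v aug u) - qu"
    by (simp add: inner_diff_right inner_commute qu_def quad_form_def)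
  finally have "unaug (S *v aug u) \<bullet> (v - u) = aug v \<bullet> (S *v aug u) - qu" .
  moreover have "\<beta> / sqrt qu * (aug v \<bullet> (S *v aug u)) \<le> \<beta> / sqrt qu * (sqrt qv * sqrt qu)"
    using psd_Cauchy_Schwarz_sqrt[OF sym psd] \<open>\<beta> \<ge> 0\<close> qu
    by (intro mult_left_mono) (simp_all add: qu_def qv_def)
  moreover have "\<beta> / sqrt qu * (sqrt qv * sqrt qu) = \<beta> * sqrt qv" and "\<beta> / sqrt qu * qu = \<beta> * sqrt qu"
    using qu by (simp_all add: field_simps)
  ultimately have "\<beta> / sqrt qu * (unaug (S *v aug u) \<bullet> (v - u)) \<le> \<beta> * sqrt qv - \<beta> * sqrt qu"
    by (simp add: right_diff_distrib)
  moreover have "socp_supergradient \<beta> p S u \<bullet> (v - u)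
      = p \<bullet> (v - u) - \<beta> / sqrt qu * (unaug (S *v aug u) \<bullet> (v - u))"
    by (simp add: socp_supergradient_def inner_diff_left qu_def)
  moreover have "p \<bullet> (v - u) = p \<bullet> v - p \<bullet> u" by (rule inner_diff_right)
  ultimately show "socp_constraint \<beta> a p S v
      \<le> socp_constraint \<beta> a p S u + socp_supergradient \<beta> p S u \<bullet> (v - u)"
    unfolding socp_constraint_def qu_def[symmetric] qv_def[symmetric] by linarith
qed

lemma lipschitz_on_socp_constraint_family:
  fixes \<alpha> :: "'y::metric_space \<Rightarrow> real" and p :: "'y \<Rightarrow> real^'m"
    and S :: "'y \<Rightarrow> real^('m option)^('m option)"
  assumes Y: "bounded Y" and \<alpha>: "L\<alpha>-lipschitz_on Y \<alpha>" and p: "Lp-lipschitz_on Y p"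
    and S: "LS-lipschitz_on Y S"
    and lower: "\<And>y w. y \<in> Y \<Longrightarrow> l * (norm w)\<^sup>2 \<le> quad_form (S y) w" and l: "l > 0"
  shows "\<exists>L. L-lipschitz_on (Y \<times> cball 0 \<rho>) (\<lambda>(y, u). socp_constraint \<beta> (\<alpha> y) (p y) (S y) u)"
    and "\<exists>L. L-lipschitz_on (Y \<times> cball 0 \<rho>) (\<lambda>(y, u). socp_supergradient \<beta> (p y) (S y) u)"
proof -
  define U where "U = Y \<times> cball (0::real^'m) \<rho>"
  have U: "bounded U" using Y by (simp add: U_def bounded_Times)
  have fst: "\<And>C f. C-lipschitz_on Y f \<Longrightarrow> C-lipschitz_on U (\<lambda>z. f (fst z))"
    and snd: "\<And>C f. C-lipschitz_on (cball 0 \<rho>) f \<Longrightarrow> C-lipschitz_on U (\<lambda>z. f (snd z))"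
    unfolding U_def by (fact lipschitz_on_fst_comp, fact lipschitz_on_snd_comp)
  define V where "V z = S (fst z) *v aug (snd z)" for z
  define Q where "Q z = aug (snd z) \<bullet> V z" for z
  obtain LV where LV: "LV-lipschitz_on U V"
    using bounded_bilinear.lipschitz_on_bounded[OF bounded_bilinear_matrix_vector_mult U fst[OF S]
        snd[OF lipschitz_on_aug]] unfolding V_def by blast
  obtain LQ where LQ: "LQ-lipschitz_on U Q"
    using bounded_bilinear.lipschitz_on_bounded[OF bounded_bilinear_inner U snd[OF lipschitz_on_aug] LV]
    unfolding Q_def by blast
  have Q_ge: "Q z \<ge> l" if "z \<in> U" for z
  proof -
    have "l * 1 \<le> l * (norm (aug (snd z)))\<^sup>2"
      using l by (intro mult_left_mono) (simp_all add: norm_aug_squared)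
    thus ?thesis using lower[of "fst z" "aug (snd z)"] that
      by (auto simp: Q_def V_def quad_form_def U_def mem_Times_iff)
  qed
  have sqrt_Q: "(1 / (2 * sqrt l) * LQ)-lipschitz_on U (\<lambda>z. sqrt (Q z))"
    using Q_ge by (intro lipschitz_on_compose2[OF LQ] lipschitz_on_subset[OF lipschitz_on_sqrt[OF l]]) auto
  have "sqrt (Q z) \<ge> sqrt l" if "z \<in> U" for z using Q_ge[OF that] by simp
  hence inv_sqrt_Q: "(1 / (sqrt l)\<^sup>2 * (1 / (2 * sqrt l) * LQ))-lipschitz_on U (\<lambda>z. inverse (sqrt (Q z)))"
    using l by (intro lipschitz_on_compose2[OF sqrt_Q] lipschitz_on_subset[OF lipschitz_on_inverse]) auto
  obtain Lpu where "Lpu-lipschitz_on U (\<lambda>z. p (fst z) \<bullet> snd z)"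
    using bounded_bilinear.lipschitz_on_bounded[OF bounded_bilinear_inner U fst[OF p] snd[OF lipschitz_on_id]]
    by blast
  hence "\<exists>L. L-lipschitz_on U (\<lambda>z. \<alpha> (fst z) + p (fst z) \<bullet> snd z - \<beta> * sqrt (Q z))"
    using lipschitz_on_diff[OF lipschitz_on_add[OF fst[OF \<alpha>]] lipschitz_on_cmult_real[OF sqrt_Q]]
    by blast
  thus "\<exists>L. L-lipschitz_on (Y \<times> cball 0 \<rho>) (\<lambda>(y, u). socp_constraint \<beta> (\<alpha> y) (p y) (S y) u)"
    by (simp add: U_def Q_def V_def socp_constraint_def quad_form_def case_prod_unfold)
  obtain LG where "LG-lipschitz_on U (\<lambda>z. (\<beta> * inverse (sqrt (Q z))) *\<^sub>R unaug (V z))"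
    using bounded_bilinear.lipschitz_on_bounded[OF bounded_bilinear_scaleR U
        lipschitz_on_cmult_real[OF inv_sqrt_Q] lipschitz_on_compose2[OF LV lipschitz_on_unaug]]
    by blast
  hence "\<exists>L. L-lipschitz_on U (\<lambda>z. p (fst z) - (\<beta> * inverse (sqrt (Q z))) *\<^sub>R unaug (V z))"
    using lipschitz_on_diff[OF fst[OF p]] by blast
  thus "\<exists>L. L-lipschitz_on (Y \<times> cball 0 \<rho>) (\<lambda>(y, u). socp_supergradient \<beta> (p y) (S y) u)"
    by (simp add: U_def Q_def V_def socp_supergradient_def quad_form_def case_prod_unfold divide_inverse)
qed

lemma neg_min_eigenvalue_imp_steep_direction:
  fixes S :: "real^('m::finite option)^('m option)" and g :: "real^'m"
  assumes sym: "transpose S = S" and psd: "\<And>w. quad_form S w \<ge> 0" and "\<beta> \<ge> 0"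
    and neg: "min_eigenvalue ((\<beta>\<^sup>2) *\<^sub>R (\<chi> i j. S $ Some i $ Some j) - (\<chi> i j. g $ i * g $ j)) < 0"
  obtains d where "\<beta> * sqrt (quad_form S (aug0 d)) < g \<bullet> d"
proof -
  define M where "M = (\<beta>\<^sup>2) *\<^sub>R (\<chi> i j. S $ Some i $ Some j) - (\<chi> i j. g $ i * g $ j)"
  have "transpose M = M"
    using sym unfolding M_def transpose_def vec_eq_iff by (auto simp: mult.commute)
  then obtain v where "quad_form M v < 0"
    using min_eigenvalue_neg_imp_neg_quad_form neg M_def by blast
  moreover have "quad_form M v
      = \<beta>\<^sup>2 * quad_form (\<chi> i j. S $ Some i $ Some j) v - quad_form (\<chi> i j. g $ i * g $ j) v"
    unfolding M_def quad_form_def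
    by (simp add: matrix_vector_mult_diff_rdistrib inner_diff_right flip: scaleR_matrix_vector_assoc)
  hence "quad_form M v = \<beta>\<^sup>2 * quad_form S (aug0 v) - (g \<bullet> v)\<^sup>2"
    by (simp add: quad_form_aug0_eq_lower_block quad_form_outer)
  ultimately have "sqrt (\<beta>\<^sup>2 * quad_form S (aug0 v)) < sqrt ((g \<bullet> v)\<^sup>2)"
    by (intro real_sqrt_less_mono) linarith
  hence "\<beta> * sqrt (quad_form S (aug0 v)) < \<bar>g \<bullet> v\<bar>"
    using \<open>\<beta> \<ge> 0\<close> by (simp add: real_sqrt_mult)
  moreover have "quad_form S (aug0 (- v)) = quad_form S (aug0 v)"
    by (simp add: aug0_minus quad_form_minus)
  ultimately show ?thesis
    using that[of v] that[of "- v"] by (cases "g \<bullet> v \<ge> 0") auto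
qed

lemma quad_form_lower_bound_perturb:
  assumes lower: "\<And>w. l * (norm w)\<^sup>2 \<le> quad_form S w" and close: "norm (S' - S) \<le> l / 2"
  shows "l / 2 * (norm w)\<^sup>2 \<le> quad_form S' w"
proof -
  have "\<bar>quad_form (S' - S) w\<bar> \<le> l / 2 * (norm w)\<^sup>2"
    using abs_quad_form_le[of "S' - S" w] close by (meson mult_right_mono order_trans zero_le_power2)
  thus ?thesis using lower[of w] quad_form_diff_matrix[of S' w S] by linarith
qed

lemma socp_constraint_along_ray:
  assumes sym: "transpose S = S" and psd: "\<And>w. quad_form S w \<ge> 0" and "\<beta> \<ge> 0" "t \<ge> 0"
  shows "a - \<beta> * sqrt (quad_form S (aug 0)) + t * (p \<bullet> d - \<beta> * sqrt (quad_form S (aug0 d)))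
      \<le> socp_constraint \<beta> a p S (t *\<^sub>R d)"
proof -
  have "sqrt (quad_form S (aug (t *\<^sub>R d))) \<le> sqrt (quad_form S (aug 0)) + sqrt (quad_form S (t *\<^sub>R aug0 d))"
    using sqrt_quad_form_triangle[OF sym psd] aug_add_scaleR[of 0 t d] by simp
  also have "sqrt (quad_form S (t *\<^sub>R aug0 d)) = t * sqrt (quad_form S (aug0 d))"
    using \<open>t \<ge> 0\<close> by (simp add: quad_form_scaleR real_sqrt_mult)
  finally have "\<beta> * sqrt (quad_form S (aug (t *\<^sub>R d)))
      \<le> \<beta> * (sqrt (quad_form S (aug 0)) + t * sqrt (quad_form S (aug0 d)))"
    using \<open>\<beta> \<ge> 0\<close> by (rule mult_left_mono)
  thus ?thesis by (simp add: socp_constraint_def algebra_simps)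
qed

lemma socp_uniform_slater_near:
  fixes \<alpha> :: "'y::metric_space \<Rightarrow> real" and p :: "'y \<Rightarrow> real^'m"
    and S :: "'y \<Rightarrow> real^('m::finite option)^('m option)"
  assumes cont: "isCont \<alpha> x" "isCont p x" "isCont S x" and "\<beta> \<ge> 0"
    and sym: "\<And>y. transpose (S y) = S y" and pd: "\<And>w. w \<noteq> 0 \<Longrightarrow> quad_form (S x) w > 0"
    and steep: "\<beta> * sqrt (quad_form (S x) (aug0 d)) < p x \<bullet> d"
  obtains \<epsilon> l u0 where "\<epsilon> > 0" "l > 0" "\<And>y w. y \<in> ball x \<epsilon> \<Longrightarrow> l * (norm w)\<^sup>2 \<le> quad_form (S y) w"
    "\<And>y. y \<in> ball x \<epsilon> \<Longrightarrow> socp_constraint \<beta> (\<alpha> y) (p y) (S y) u0 \<ge> 1"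
proof -
  obtain l where l: "l > 0" "\<And>w. l * (norm w)\<^sup>2 \<le> quad_form (S x) w"
    using pd_quad_form_coercive pd by blast
  define \<kappa> where "\<kappa> y = p y \<bullet> d - \<beta> * sqrt (quad_form (S y) (aug0 d))" for y
  define s where "s y = sqrt (quad_form (S y) (aug 0))" for y
  have quad: "isCont (\<lambda>y. quad_form (S y) w) x" for w
    unfolding quad_form_def
    by (intro continuous_intros bounded_bilinear.isCont[OF bounded_bilinear_matrix_vector_mult cont(3)])
  have "isCont \<kappa> x" "isCont s x"
    unfolding \<kappa>_def s_def by (intro continuous_intros cont(2) quad)+
  hence "(\<kappa> \<longlongrightarrow> \<kappa> x) (nhds x)" "(s \<longlongrightarrow> s x) (nhds x)" "(\<alpha> \<longlongrightarrow> \<alpha> x) (nhds x)"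
    "(S \<longlongrightarrow> S x) (nhds x)"
    using cont by (simp_all add: isCont_def tendsto_at_iff_tendsto_nhds)
  hence "\<forall>\<^sub>F y in nhds x. \<kappa> x / 2 < \<kappa> y \<and> s y < s x + 1 \<and> \<alpha> x - 1 < \<alpha> y \<and> dist (S y) (S x) < l / 2"
    using steep l(1) unfolding \<kappa>_def
    by (intro eventually_conj order_tendstoD tendstoD) auto
  moreover define t where "t = max 0 ((2 - \<alpha> x + \<beta> * (s x + 1)) / (\<kappa> x / 2))"
  moreover have "\<kappa> x > 0" using steep by (simp add: \<kappa>_def)
  ultimately have "\<forall>\<^sub>F y in nhds x. (\<forall>w. l / 2 * (norm w)\<^sup>2 \<le> quad_form (S y) w)
      \<and> socp_constraint \<beta> (\<alpha> y) (p y) (S y) (t *\<^sub>R d) \<ge> 1"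
  proof (elim eventually_mono, intro conjI allI)
    fix y assume near: "\<kappa> x / 2 < \<kappa> y \<and> s y < s x + 1 \<and> \<alpha> x - 1 < \<alpha> y \<and> dist (S y) (S x) < l / 2"
    show lower: "l / 2 * (norm w)\<^sup>2 \<le> quad_form (S y) w" for w
      using near l(2) by (intro quad_form_lower_bound_perturb) (auto simp: dist_norm)
    have "\<alpha> x - 1 - \<beta> * (s x + 1) + t * (\<kappa> x / 2) \<ge> 1"
      using \<open>\<kappa> x > 0\<close> by (simp add: t_def field_simps max_def)
    also have "\<dots> \<le> \<alpha> y - \<beta> * s y + t * \<kappa> y"
      using near \<open>\<beta> \<ge> 0\<close> by (intro add_mono diff_mono mult_left_mono) (auto simp: t_def)
    also have "\<dots> \<le> socp_constraint \<beta> (\<alpha> y) (p y) (S y) (t *\<^sub>R d)"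
      unfolding s_def \<kappa>_def using \<open>\<beta> \<ge> 0\<close> l(1)
      by (intro socp_constraint_along_ray sym order_trans[OF _ lower]) (auto simp: t_def)
    finally show "socp_constraint \<beta> (\<alpha> y) (p y) (S y) (t *\<^sub>R d) \<ge> 1" .
  qed
  then obtain \<epsilon> where "\<epsilon> > 0" "\<And>y. dist y x < \<epsilon> \<Longrightarrow> (\<forall>w. l / 2 * (norm w)\<^sup>2 \<le> quad_form (S y) w)
      \<and> socp_constraint \<beta> (\<alpha> y) (p y) (S y) (t *\<^sub>R d) \<ge> 1"
    unfolding eventually_nhds_metric by blast
  with l(1) show ?thesis by (intro that[of \<epsilon> "l / 2"]) (auto simp: dist_commute)
qed

lemma socp_nearest_feasible_lipschitz:
  fixes \<beta> :: real and \<alpha> :: "'y::metric_space \<Rightarrow> real" and p r :: "'y \<Rightarrow> real^'m"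
    and S :: "'y \<Rightarrow> real^('m::finite option)^('m option)"
  defines "c \<equiv> \<lambda>y. socp_constraint \<beta> (\<alpha> y) (p y) (S y)"
  assumes Y: "bounded Y" and lip: "L\<alpha>-lipschitz_on Y \<alpha>" "Lp-lipschitz_on Y p" "LS-lipschitz_on Y S"
      "Lr-lipschitz_on Y r"
    and sym: "\<And>y. y \<in> Y \<Longrightarrow> transpose (S y) = S y"
    and lower: "\<And>y w. y \<in> Y \<Longrightarrow> l * (norm w)\<^sup>2 \<le> quad_form (S y) w" and "l > 0" "\<beta> \<ge> 0"
    and slater: "\<And>y. y \<in> Y \<Longrightarrow> c y u0 \<ge> 1"
  shows "(\<forall>y\<in>Y. \<exists>!u. nearest_feasible (c y) (r y) u) \<and>
    (\<exists>L. L-lipschitz_on Y (\<lambda>y. THE u. nearest_feasible (c y) (r y) u))"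
proof -
  have pd: "quad_form (S y) w > 0" if "y \<in> Y" "w \<noteq> 0" for y w
    using lower[OF that(1), of w] \<open>l > 0\<close> that(2) by (smt (verit) mult_pos_pos zero_less_norm_iff zero_less_power)
  obtain R where "\<And>y. y \<in> Y \<Longrightarrow> norm (r y) \<le> R"
    using lipschitz_on_bounded_image[OF lip(4) Y] unfolding bounded_iff by auto
  then show ?thesis
    unfolding c_def
  proof (intro nearest_feasible_lipschitz[where G="\<lambda>y. socp_supergradient \<beta> (p y) (S y)"])
    fix y assume y: "y \<in> Y"
    show "has_supergradient (socp_constraint \<beta> (\<alpha> y) (p y) (S y)) (socp_supergradient \<beta> (p y) (S y))"
      using sym[OF y] pd[OF y] \<open>\<beta> \<ge> 0\<close> by (rule socp_constraint_has_supergradient)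
    show "((\<lambda>t. socp_constraint \<beta> (\<alpha> y) (p y) (S y) (u + t *\<^sub>R d)) has_real_derivative
        socp_supergradient \<beta> (p y) (S y) u \<bullet> d) (at 0)" for u d
      using sym[OF y] pd[OF y aug_nonzero] by (rule socp_constraint_line_derivative)
  qed (use lipschitz_on_socp_constraint_family[OF Y lip(1-3) lower \<open>l > 0\<close>] lip(4) slater[unfolded c_def]
      continuous_on_socp_constraint in auto)
qed

lemma socp_nearest_feasible_locally_lipschitz:
  fixes \<beta> :: real and \<alpha> :: "'y::metric_space \<Rightarrow> real" and p r :: "'y \<Rightarrow> real^'m"
    and S :: "'y \<Rightarrow> real^('m::finite option)^('m option)"
  defines "c \<equiv> \<lambda>y. socp_constraint \<beta> (\<alpha> y) (p y) (S y)"
  assumes lip: "L\<alpha>-lipschitz_on (cball x e) \<alpha>" "Lp-lipschitz_on (cball x e) p"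
      "LS-lipschitz_on (cball x e) S" "Lr-lipschitz_on (cball x e) r" and "e > 0"
    and sym: "\<And>y. transpose (S y) = S y" and pd: "\<And>w. w \<noteq> 0 \<Longrightarrow> quad_form (S x) w > 0"
    and steep: "\<beta> * sqrt (quad_form (S x) (aug0 d)) < p x \<bullet> d" and "\<beta> \<ge> 0"
  obtains \<epsilon> where "0 < \<epsilon>" "\<epsilon> \<le> e" "\<forall>y\<in>ball x \<epsilon>. \<exists>!u. nearest_feasible (c y) (r y) u"
    "\<exists>L. L-lipschitz_on (ball x \<epsilon>) (\<lambda>y. THE u. nearest_feasible (c y) (r y) u)"
proof -
  obtain \<epsilon> l u0 where near: "\<epsilon> > 0" "l > 0"
      "\<And>y w. y \<in> ball x \<epsilon> \<Longrightarrow> l * (norm w)\<^sup>2 \<le> quad_form (S y) w"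
      "\<And>y. y \<in> ball x \<epsilon> \<Longrightarrow> c y u0 \<ge> 1"
    using socp_uniform_slater_near[OF lipschitz_on_cball_isCont[OF lip(1) \<open>e > 0\<close>]
        lipschitz_on_cball_isCont[OF lip(2) \<open>e > 0\<close>] lipschitz_on_cball_isCont[OF lip(3) \<open>e > 0\<close>]
        \<open>\<beta> \<ge> 0\<close> sym pd steep] unfolding c_def by metis
  have sub: "ball x (min \<epsilon> e) \<subseteq> cball x e" "ball x (min \<epsilon> e) \<subseteq> ball x \<epsilon>" by auto
  have "(\<forall>y\<in>ball x (min \<epsilon> e). \<exists>!u. nearest_feasible (c y) (r y) u) \<and>
    (\<exists>L. L-lipschitz_on (ball x (min \<epsilon> e)) (\<lambda>y. THE u. nearest_feasible (c y) (r y) u))"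
    using near sub(2) \<open>\<beta> \<ge> 0\<close> unfolding c_def
    by (intro socp_nearest_feasible_lipschitz[where l=l, OF _ lipschitz_on_subset[OF lip(1) sub(1)]
          lipschitz_on_subset[OF lip(2) sub(1)] lipschitz_on_subset[OF lip(3) sub(1)]
          lipschitz_on_subset[OF lip(4) sub(1)] sym]) auto
  thus ?thesis using near(1) \<open>e > 0\<close> by (intro that[of "min \<epsilon> e"]) auto
qed

section \<open>The GP model\<close>

lemma lipschitz_on_of_affine_evaluations:
  fixes m :: "'a::metric_space \<Rightarrow> real^('m::finite option)"
  assumes "\<And>u. \<exists>L. L-lipschitz_on K (\<lambda>y. m y \<bullet> aug u)"
  shows "\<exists>L. L-lipschitz_on K m"
proof (rule ex_lipschitz_on_vec_lambda)
  fix i :: "'m option"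
  have m_None: "m y $ None = m y \<bullet> aug 0" and m_Some: "m y $ Some j = m y \<bullet> aug (axis j 1) - m y \<bullet> aug 0"
    for y j by (simp_all add: inner_aug inner_axis)
  show "\<exists>L. L-lipschitz_on K (\<lambda>y. m y $ i)"
  proof (cases i)
    case None thus ?thesis using assms[of 0] by (simp add: m_None)
  next
    case (Some j)
    obtain L0 L1 where "L0-lipschitz_on K (\<lambda>y. m y \<bullet> aug 0)" "L1-lipschitz_on K (\<lambda>y. m y \<bullet> aug (axis j 1))"
      using assms by metis
    hence "(L1 + L0)-lipschitz_on K (\<lambda>y. m y \<bullet> aug (axis j 1) - m y \<bullet> aug 0)"
      by (intro lipschitz_on_diff)
    thus ?thesis unfolding Some m_Some by blast
  qed
qed

lemma quad_form_aug_polarization: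
  fixes S :: "real^('m::finite option)^('m option)"
  defines "Q \<equiv> \<lambda>u. quad_form S (aug u)"
  shows "quad_form S v
    = ((v $ None)\<^sup>2 - 1) * Q 0 + (1 + v $ None) / 2 * Q (unaug v) + (1 - v $ None) / 2 * Q (- unaug v)"
proof -
  define e :: "real^('m option)" and f where "e = axis None 1" and "f = aug0 (unaug v)"
  have v: "v = v $ None *\<^sub>R e + f"
    by (simp add: vec_eq_iff e_def f_def axis_def aug0_def split: option.splits)
  define X where "X = e \<bullet> (S *v f) + f \<bullet> (S *v e)"
  have aug_v: "aug (unaug v) = e + f" "aug (- unaug v) = e + - f" "aug 0 = e"
    by (simp_all add: aug_eq_axis_add_aug0 aug0_minus e_def f_def)
  have "S *v (- f) = - (S *v f)" using matrix_vector_mult_scaleR[of S "-1" f] by simp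
  hence "quad_form S (e + - f) = quad_form S e - X + quad_form S f"
    by (simp only: quad_form_add quad_form_minus X_def inner_minus_left inner_minus_right)
  hence Q: "Q 0 = quad_form S e" "Q (unaug v) = quad_form S e + X + quad_form S f"
    "Q (- unaug v) = quad_form S e - X + quad_form S f"
    unfolding Q_def aug_v by (simp_all add: quad_form_add X_def)
  have "quad_form S v = (v $ None)\<^sup>2 * quad_form S e + v $ None * X + quad_form S f"
    by (subst v) (simp add: quad_form_add quad_form_scaleR X_def matrix_vector_mult_scaleR algebra_simps)
  thus ?thesis unfolding Q by (simp add: field_simps)
qed

lemma lipschitz_on_of_quad_forms_aug:
  fixes S :: "'a::metric_space \<Rightarrow> real^('m::finite option)^('m option)"
  assumes sym: "\<And>y. y \<in> K \<Longrightarrow> transpose (S y) = S y"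
    and quad: "\<And>u. \<exists>L. L-lipschitz_on K (\<lambda>y. quad_form (S y) (aug u))"
  shows "\<exists>L. L-lipschitz_on K S"
proof -
  have all_quad: "\<exists>L. L-lipschitz_on K (\<lambda>y. quad_form (S y) v)" for v
  proof -
    obtain L0 L1 L2 where L: "L0-lipschitz_on K (\<lambda>y. quad_form (S y) (aug 0))"
      "L1-lipschitz_on K (\<lambda>y. quad_form (S y) (aug (unaug v)))"
      "L2-lipschitz_on K (\<lambda>y. quad_form (S y) (aug (- unaug v)))"
      using quad by metis
    hence "\<exists>L. L-lipschitz_on K (\<lambda>y. ((v $ None)\<^sup>2 - 1) * quad_form (S y) (aug 0)
        + (1 + v $ None) / 2 * quad_form (S y) (aug (unaug v))
        + (1 - v $ None) / 2 * quad_form (S y) (aug (- unaug v)))"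
      using lipschitz_on_add[OF lipschitz_on_add[OF lipschitz_on_cmult_real[OF L(1)]
          lipschitz_on_cmult_real[OF L(2)]] lipschitz_on_cmult_real[OF L(3)]] by blast
    thus ?thesis unfolding quad_form_aug_polarization[of "S _" v] .
  qed
  show ?thesis
  proof (intro ex_lipschitz_on_vec_lambda)
    fix i j
    obtain L1 L2 where "L1-lipschitz_on K (\<lambda>y. quad_form (S y) (axis i 1 + axis j 1))"
      "L2-lipschitz_on K (\<lambda>y. quad_form (S y) (axis i 1 - axis j 1))"
      using all_quad by metis
    hence "(\<bar>1 / 4\<bar> * (L1 + L2))-lipschitz_on K (\<lambda>y. 1 / 4 * (quad_form (S y) (axis i 1 + axis j 1)
        - quad_form (S y) (axis i 1 - axis j 1)))"
      by (intro lipschitz_on_cmult_real lipschitz_on_diff)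
    moreover have "S y $ i $ j = 1 / 4 * (quad_form (S y) (axis i 1 + axis j 1)
        - quad_form (S y) (axis i 1 - axis j 1))" if "y \<in> K" for y
      using matrix_entry_polarization[OF sym[OF that]] by simp
    ultimately show "\<exists>L. L-lipschitz_on K (\<lambda>y. S y $ i $ j)"
      by (metis (no_types, lifting) lipschitz_on_transform)
  qed
qed

lemma sum_mult_over_fibers:
  fixes x :: "'j \<Rightarrow> 'p" and c :: "'j \<Rightarrow> real"
  assumes "finite J"
  shows "(\<Sum>p\<in>x ` J. (\<Sum>j\<in>{j\<in>J. x j = p}. c j) * h p) = (\<Sum>j\<in>J. c j * h (x j))"
proof -
  have "(\<Sum>j\<in>J. c j * h (x j)) = (\<Sum>p\<in>x ` J. \<Sum>j\<in>{j\<in>J. x j = p}. c j * h (x j))"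
    using assms by (rule sum.image_gen)
  also have "\<dots> = (\<Sum>p\<in>x ` J. (\<Sum>j\<in>{j\<in>J. x j = p}. c j) * h p)"
    by (simp add: sum_distrib_right)
  finally show ?thesis by simp
qed

text \<open>\<^const>\<open>psd_kernel\<close> speaks about finite sets of points, so repeated data points are merged
  by summing their coefficients.\<close>

lemma psd_kernel_double_sum_nonneg:
  assumes k: "psd_kernel k" and J: "finite J"
  shows "(\<Sum>j\<in>J. \<Sum>l\<in>J. c j * c l * k (x j) (x l)) \<ge> 0"
proof -
  define C where "C p = (\<Sum>j\<in>{j\<in>J. x j = p}. c j)" for p
  have "0 \<le> (\<Sum>p\<in>x ` J. \<Sum>q\<in>x ` J. C p * C q * k p q)"
    using k J unfolding psd_kernel_def by blast
  also have "\<dots> = (\<Sum>p\<in>x ` J. C p * (\<Sum>q\<in>x ` J. C q * k p q))"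
    by (simp add: sum_distrib_left mult_ac)
  also have "\<dots> = (\<Sum>j\<in>J. c j * (\<Sum>l\<in>J. c l * k (x j) (x l)))"
    unfolding C_def sum_mult_over_fibers[OF J] ..
  also have "\<dots> = (\<Sum>j\<in>J. \<Sum>l\<in>J. c j * c l * k (x j) (x l))"
    by (simp add: sum_distrib_left mult_ac)
  finally show ?thesis .
qed

lemma gram_c_symmetric:
  assumes "\<forall>i. psd_kernel (k i)"
  shows "transpose (gram_c k xs us) = gram_c k xs us"
  using assms unfolding psd_kernel_def gram_c_def transpose_def by (simp add: vec_eq_iff mult_ac)

lemma gram_c_psd:
  assumes ker: "\<forall>i. psd_kernel (k i)"
  shows "quad_form (gram_c k xs us) v \<ge> 0"
proof -
  have "quad_form (gram_c k xs us) v = (\<Sum>j\<in>UNIV. \<Sum>l\<in>UNIV. \<Sum>i\<in>UNIV.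
      (v $ j * aug (us j) $ i) * (v $ l * aug (us l) $ i) * k i (xs j) (xs l))"
    unfolding quad_form_def inner_vec_def matrix_vector_mult_def gram_c_def
    by (simp add: sum_distrib_left sum_distrib_right mult_ac)
  also have "\<dots> = (\<Sum>j\<in>UNIV. \<Sum>i\<in>UNIV. \<Sum>l\<in>UNIV.
      (v $ j * aug (us j) $ i) * (v $ l * aug (us l) $ i) * k i (xs j) (xs l))"
    by (intro sum.cong refl sum.swap)
  also have "\<dots> = (\<Sum>i\<in>UNIV. \<Sum>j\<in>UNIV. \<Sum>l\<in>UNIV.
      (v $ j * aug (us j) $ i) * (v $ l * aug (us l) $ i) * k i (xs j) (xs l))"
    by (rule sum.swap)
  also have "\<dots> \<ge> 0"
    using ker by (intro sum_nonneg psd_kernel_double_sum_nonneg) auto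
  finally show ?thesis .
qed

lemma invertible_if_pd:
  fixes A :: "real^'n^'n"
  assumes pd: "\<And>v. v \<noteq> 0 \<Longrightarrow> quad_form A v > 0"
  shows "invertible A"
proof -
  have "inj ((*v) A)"
  proof (rule injI)
    fix a b assume "A *v a = A *v b"
    hence "quad_form A (a - b) = 0" by (simp add: quad_form_def matrix_vector_mult_diff_distrib)
    thus "a = b" using pd[of "a - b"] by auto
  qed
  thus ?thesis using invertible_left_inverse matrix_left_invertible_injective by blast
qed

lemma matrix_inv_symmetric:
  fixes A :: "real^'n^'n"
  assumes inv: "invertible A" and sym: "transpose A = A"
  shows "transpose (matrix_inv A) = matrix_inv A"
proof -
  have AB: "A ** matrix_inv A = mat 1"
    using inv unfolding matrix_inv_def invertible_def by (metis (mono_tags, lifting) someI_ex)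
  have "transpose (matrix_inv A) ** A = mat 1"
    using AB sym by (metis matrix_transpose_mul transpose_mat)
  hence "transpose (matrix_inv A) = transpose (matrix_inv A) ** (A ** matrix_inv A)" using AB by simp
  also have "\<dots> = (transpose (matrix_inv A) ** A) ** matrix_inv A" by (simp add: matrix_mul_assoc)
  also have "\<dots> = matrix_inv A" by (simp add: \<open>transpose (matrix_inv A) ** A = mat 1\<close>)
  finally show ?thesis .
qed

lemma transpose_diff: "transpose (P - Q) = transpose P - transpose (Q :: 'a::ab_group_add^'n^'m)"
  by (simp add: transpose_def vec_eq_iff)

lemma Sigma_B_symmetric:
  assumes ker: "\<forall>i. psd_kernel (k i)" and sn: "sn > 0"
  shows "transpose (Sigma_B k sn xs us y) = Sigma_B k sn xs us y"
proof -
  define A where "A = gram_c k xs us + (sn\<^sup>2) *\<^sub>R mat 1"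
  have symA: "transpose A = A"
    using gram_c_symmetric[OF ker, of xs us]
    by (simp add: A_def transpose_def vec_eq_iff mat_def)
  have "quad_form A v > 0" if "v \<noteq> 0" for v
  proof -
    have "quad_form A v = quad_form (gram_c k xs us) v + sn\<^sup>2 * (v \<bullet> v)"
      by (simp add: A_def quad_form_def matrix_vector_mult_add_rdistrib inner_add_right
          flip: scaleR_matrix_vector_assoc)
    thus ?thesis using gram_c_psd[OF ker, of xs us v] sn that by (simp add: add_nonneg_pos)
  qed
  hence "transpose (matrix_inv A) = matrix_inv A"
    using symA by (intro matrix_inv_symmetric invertible_if_pd)
  moreover have "transpose (K_starstar k y) = K_starstar k y"
    by (simp add: K_starstar_def transpose_def vec_eq_iff)
  ultimately show ?thesis
    unfolding Sigma_B_def A_def[symmetric] by (simp add: transpose_diff matrix_transpose_mul matrix_mul_assoc)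
qed

lemma lambda_dagger_neg_imp_steep_direction:
  assumes "\<forall>i. psd_kernel (k i)" "sn > 0" "\<beta> \<ge> 0"
    and pd: "\<And>w. w \<noteq> 0 \<Longrightarrow> quad_form (Sigma_B k sn xs us x) w > 0"
    and "lambda_dagger \<beta> gradB gt k sn xs us zs x < 0"
  obtains d where "\<beta> * sqrt (quad_form (Sigma_B k sn xs us x) (aug0 d)) < LgB_hat gradB gt k sn xs us zs x \<bullet> d"
proof (rule neg_min_eigenvalue_imp_steep_direction)
  show "quad_form (Sigma_B k sn xs us x) w \<ge> 0" for w
    using pd[of w] by (cases "w = 0") (auto simp: quad_form_def)
qed (use assms Sigma_B_symmetric in \<open>auto simp: lambda_dagger_def Sigma_LgB_def Let_def\<close>)

lemma socp_feasible_iff_socp_constraint: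
  "socp_feasible \<beta> \<gamma> B gradB ft gt k sn xs us zs y u \<longleftrightarrow>
    socp_constraint \<beta> (LfB gradB ft y + \<gamma> (B y) + m_B k sn xs us zs y $ None)
      (LgB_hat gradB gt k sn xs us zs y) (Sigma_B k sn xs us y) u \<ge> 0"
proof -
  have "LgB_hat gradB gt k sn xs us zs y = LgB gradB gt y + unaug (m_B k sn xs us zs y)"
    by (simp add: LgB_hat_def unaug_def)
  thus ?thesis
    by (simp add: socp_feasible_def socp_constraint_def mu_B_def sigma_B_def quad_form_def
        inner_aug inner_add_left algebra_simps)
qed

lemma socp_minimizer_iff_nearest_feasible:
  "socp_minimizer \<beta> \<gamma> B gradB ft gt uref k sn xs us zs y u \<longleftrightarrow>
    nearest_feasible (socp_constraint \<beta> (LfB gradB ft y + \<gamma> (B y) + m_B k sn xs us zs y $ None)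
      (LgB_hat gradB gt k sn xs us zs y) (Sigma_B k sn xs us y)) (uref y) u"
  by (simp add: socp_minimizer_def nearest_feasible_def socp_feasible_iff_socp_constraint
      abs_le_square_iff[symmetric])

lemma gp_posterior_lipschitz_on_cball:
  assumes mu: "\<forall>u. C2_on X (\<lambda>y. mu_B k sn xs us zs y u)"
    and sigma: "\<forall>u. C2_on X (\<lambda>y. sigma_B k sn xs us y u)"
    and ker: "\<forall>i. psd_kernel (k i)" and sn: "sn > 0"
    and psd: "\<And>y w. y \<in> X \<Longrightarrow> quad_form (Sigma_B k sn xs us y) w \<ge> 0"
    and ball: "cball x e \<subseteq> X"
  shows "\<exists>L. L-lipschitz_on (cball x e) (m_B k sn xs us zs)"
    and "\<exists>L. L-lipschitz_on (cball x e) (Sigma_B k sn xs us)"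
proof -
  show "\<exists>L. L-lipschitz_on (cball x e) (m_B k sn xs us zs)"
    using C2_on_lipschitz_on_cball[OF mu[rule_format] ball]
    by (intro lipschitz_on_of_affine_evaluations) (simp add: mu_B_def)
  have "\<exists>L. L-lipschitz_on (cball x e) (\<lambda>y. quad_form (Sigma_B k sn xs us y) (aug u))" for u
  proof -
    obtain L where "L-lipschitz_on (cball x e) (\<lambda>y. sigma_B k sn xs us y u)"
      using C2_on_lipschitz_on_cball[OF sigma[rule_format] ball] by blast
    then obtain L' where "L'-lipschitz_on (cball x e) (\<lambda>y. sigma_B k sn xs us y u * sigma_B k sn xs us y u)"
      using bounded_bilinear.lipschitz_on_bounded[OF bounded_bilinear_mult bounded_cball] by metis
    moreover have "sigma_B k sn xs us y u * sigma_B k sn xs us y u = quad_form (Sigma_B k sn xs us y) (aug u)"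
      if "y \<in> cball x e" for y
      using psd[of y "aug u"] that ball by (auto simp: sigma_B_def quad_form_def)
    ultimately show ?thesis by (metis (no_types, lifting) lipschitz_on_transform)
  qed
  thus "\<exists>L. L-lipschitz_on (cball x e) (Sigma_B k sn xs us)"
    using Sigma_B_symmetric[OF ker sn] by (intro lipschitz_on_of_quad_forms_aug)
qed

lemma gp_cbf_data_lipschitz_on_cball:
  assumes "\<forall>i. psd_kernel (k i)" "sn > 0"
    and "\<forall>y\<in>X. \<forall>v. v \<noteq> 0 \<longrightarrow> v \<bullet> (Sigma_B k sn xs us y *v v) > 0"
    and "C2_on X (LfB gradB ft)" "C2_on X (LgB gradB gt)" "C2_on X (\<lambda>y. \<gamma> (B y))"
    and "\<forall>u. C2_on X (\<lambda>y. mu_B k sn xs us zs y u)" "\<forall>u. C2_on X (\<lambda>y. sigma_B k sn xs us y u)"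
    and ball: "cball x e \<subseteq> X"
  shows "\<exists>L. L-lipschitz_on (cball x e) (\<lambda>y. LfB gradB ft y + \<gamma> (B y) + m_B k sn xs us zs y $ None)"
    and "\<exists>L. L-lipschitz_on (cball x e) (LgB_hat gradB gt k sn xs us zs)"
    and "\<exists>L. L-lipschitz_on (cball x e) (Sigma_B k sn xs us)"
proof -
  have "\<And>y w. y \<in> X \<Longrightarrow> quad_form (Sigma_B k sn xs us y) w \<ge> 0"
    using assms(3) by (case_tac "w = 0") (auto simp: quad_form_def less_imp_le)
  then obtain Lm where m: "Lm-lipschitz_on (cball x e) (m_B k sn xs us zs)"
    and S: "\<exists>L. L-lipschitz_on (cball x e) (Sigma_B k sn xs us)"
    using gp_posterior_lipschitz_on_cball[OF assms(7,8,1,2) _ ball] by metis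
  obtain Lf Lg Lgam where Lf: "Lf-lipschitz_on (cball x e) (LfB gradB ft)"
    and Lg: "Lg-lipschitz_on (cball x e) (LgB gradB gt)" and Lgam: "Lgam-lipschitz_on (cball x e) (\<lambda>y. \<gamma> (B y))"
    using C2_on_lipschitz_on_cball[OF assms(4) ball] C2_on_lipschitz_on_cball[OF assms(5) ball]
      C2_on_lipschitz_on_cball[OF assms(6) ball] by blast
  show "\<exists>L. L-lipschitz_on (cball x e) (\<lambda>y. LfB gradB ft y + \<gamma> (B y) + m_B k sn xs us zs y $ None)"
    using lipschitz_on_add[OF lipschitz_on_add[OF Lf Lgam] lipschitz_on_vec_nth[OF m]] by blast
  have "LgB_hat gradB gt k sn xs us zs = (\<lambda>y. LgB gradB gt y + unaug (m_B k sn xs us zs y))"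
    by (simp add: fun_eq_iff LgB_hat_def unaug_def)
  thus "\<exists>L. L-lipschitz_on (cball x e) (LgB_hat gradB gt k sn xs us zs)"
    using lipschitz_on_add[OF Lg lipschitz_on_compose2[OF m lipschitz_on_unaug]] by auto
  show "\<exists>L. L-lipschitz_on (cball x e) (Sigma_B k sn xs us)" by (fact S)
qed

theorem lemma6:
  fixes X :: "(real^'n) set"
    and B :: "real^'n \<Rightarrow> real" and gradB :: "real^'n \<Rightarrow> real^'n"
    and \<gamma> :: "real \<Rightarrow> real"
    and ft :: "real^'n \<Rightarrow> real^'n" and gt :: "real^'n \<Rightarrow> real^'m^'n"
    and uref :: "real^'n \<Rightarrow> real^'m"
    and k :: "'m option \<Rightarrow> real^'n \<Rightarrow> real^'n \<Rightarrow> real"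
    and sn \<beta> :: real
    and xs :: "'N::finite \<Rightarrow> real^'n" and us :: "'N \<Rightarrow> real^'m" and zs :: "real^'N"
    and x :: "real^'n"
  assumes X_open: "open X"
    and B_C1: "\<forall>y\<in>X. (B has_derivative (\<lambda>h. gradB y \<bullet> h)) (at y)" "continuous_on X gradB"
    and gamma: "ext_class_K_inf \<gamma>"
    and kernels: "\<forall>i. psd_kernel (k i)"
    and sn_pos: "sn > 0" and beta_pos: "\<beta> > 0"
    and Sigma_pd: "\<forall>y\<in>X. \<forall>v. v \<noteq> 0 \<longrightarrow> v \<bullet> (Sigma_B k sn xs us y *v v) > 0"
    and A6_Lf: "C2_on X (LfB gradB ft)"
    and A6_Lg: "C2_on X (LgB gradB gt)"
    and A6_gamma: "C2_on X (\<lambda>y. \<gamma> (B y))"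
    and A6_uref: "C2_on X uref"
    and A6_mu: "\<forall>u. C2_on X (\<lambda>y. mu_B k sn xs us zs y u)"
    and A6_sigma: "\<forall>u. C2_on X (\<lambda>y. sigma_B k sn xs us y u)"
    and x_in: "x \<in> X"
    and lam_neg: "lambda_dagger \<beta> gradB gt k sn xs us zs x < 0"
  shows "\<exists>\<epsilon>>0.
           (\<forall>y\<in>ball x \<epsilon> \<inter> X. \<exists>!u. socp_minimizer \<beta> \<gamma> B gradB ft gt uref k sn xs us zs y u) \<and>
           (\<exists>L. \<forall>y1\<in>ball x \<epsilon> \<inter> X. \<forall>y2\<in>ball x \<epsilon> \<inter> X.
              dist (THE u. socp_minimizer \<beta> \<gamma> B gradB ft gt uref k sn xs us zs y1 u)
                   (THE u. socp_minimizer \<beta> \<gamma> B gradB ft gt uref k sn xs us zs y2 u)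
              \<le> L * dist y1 y2)"
proof -
  define \<alpha> where "\<alpha> y = LfB gradB ft y + \<gamma> (B y) + m_B k sn xs us zs y $ None" for y
  define p S where "p = LgB_hat gradB gt k sn xs us zs" and "S = Sigma_B k sn xs us"
  have sym: "\<And>y. transpose (S y) = S y" using Sigma_B_symmetric[OF kernels sn_pos] by (simp add: S_def)
  have pd: "\<And>w. w \<noteq> 0 \<Longrightarrow> quad_form (S x) w > 0" using Sigma_pd x_in by (simp add: S_def quad_form_def)
  obtain e0 where e0: "e0 > 0" "cball x e0 \<subseteq> X" using X_open x_in open_contains_cball by blast
  note data_lip = gp_cbf_data_lipschitz_on_cball[where \<gamma>=\<gamma> and B=B,
      OF kernels sn_pos Sigma_pd A6_Lf A6_Lg A6_gamma A6_mu A6_sigma e0(2), folded \<alpha>_def[abs_def] p_def S_def]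
  obtain L\<alpha> Lp LS Lr where lip: "L\<alpha>-lipschitz_on (cball x e0) \<alpha>" "Lp-lipschitz_on (cball x e0) p"
      "LS-lipschitz_on (cball x e0) S" "Lr-lipschitz_on (cball x e0) uref"
    using data_lip C2_on_lipschitz_on_cball[OF A6_uref e0(2)] by blast
  obtain d where steep: "\<beta> * sqrt (quad_form (S x) (aug0 d)) < p x \<bullet> d"
    using lambda_dagger_neg_imp_steep_direction[OF kernels sn_pos _ pd[unfolded S_def] lam_neg] beta_pos
    unfolding S_def p_def by fastforce
  obtain \<epsilon> where "0 < \<epsilon>" "\<epsilon> \<le> e0"
      "\<forall>y\<in>ball x \<epsilon>. \<exists>!u. nearest_feasible (socp_constraint \<beta> (\<alpha> y) (p y) (S y)) (uref y) u"
      "\<exists>L. L-lipschitz_on (ball x \<epsilon>)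
         (\<lambda>y. THE u. nearest_feasible (socp_constraint \<beta> (\<alpha> y) (p y) (S y)) (uref y) u)"
    by (rule socp_nearest_feasible_locally_lipschitz[OF lip e0(1) sym pd steep less_imp_le[OF beta_pos]])
  moreover have "ball x \<epsilon> \<inter> X = ball x \<epsilon>" using \<open>\<epsilon> \<le> e0\<close> e0(2) by auto
  ultimately show ?thesis
    by (intro exI[of _ \<epsilon>])
      (auto simp: socp_minimizer_iff_nearest_feasible lipschitz_on_def \<alpha>_def[abs_def] p_def S_def)
qed

end
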